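(* Let $T$ be a tree of order $n$ and diameter $d$ with maximum Wiener index. Let $x$ be a special vertex of $T$ and let $T_1,T_2$ be components of $T-x$ such that each of them contains exactly one broom vertex of $T$ and $d(y,y')<d$ for all leaves $y\in V(T_1)$, $y'\in V(T_2)$. Let $y_1\in V(T_1)$ and $y_2\in V(T_2)$ be leaves of $T$, let $y_1'$ be the broom vertex adjacent to $y_1$, let $p=d(x,y_1)=d(x,y_2)$, and for $i\in\{1,2\}$ let $t_i$ be the number of leaves of $T$ contained in $T_i$. Let $T'=T_2\xrightarrow{T} y_1'$. Let $A=V(T_1)\cup\{x\}$ and $B=V(T)\setminus(A\cup V(T_2))$. Then $$W(T')-W(T)=(p+t_2-1)(p+t_2-2)-\frac{p(p-1)}{6}(3t_2+p-2)-t_2(t_2-1)+|A\cup B|\Big(p+t_2-1-\frac p2(p-1+2t_2)\Big)+(p+t_2-1)(p-1)(|B|-t_1).$$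
   Context: All graphs are finite and simple; $d(u,v)$ denotes distance and $W(G)=\sum_{\{u,v\}\subseteq V(G)} d(u,v)$ is the Wiener index. A tree $T$ of order $n$ and diameter $d$ has maximum Wiener index if $W(T')\leq W(T)$ for every tree $T'$ of order $n$ and diameter $d$. A leaf is a vertex of degree $1$; a broom vertex of $T$ is a vertex adjacent to a leaf of $T$. A vertex $x$ of a tree $T$ of diameter $d$ is special if $\deg(x)\geq 3$ and there exist components $T_1,T_2$ of $T-x$ such that each contains exactly one broom vertex of $T$ and $d(y,y')<d$ for all leaves $y\in V(T_1)$, $y'\in V(T_2)$ (for a tree of maximum Wiener index one then has $d(x,y)=d(x,y')$ for such leaves). For such $x,T_1,T_2$ and the broom vertex $y_1'$ of $T_1$, the tree $T_2\xrightarrow{T} y_1'$ ("relocating a broom") is obtained from $T$ by deleting all vertices of $T_2$ and attaching $|V(T_2)|$ new leaves to $y_1'$. *)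

theory Defs
  imports Complex_Main
begin

definition sgraph :: "'a set \<Rightarrow> ('a \<Rightarrow> 'a \<Rightarrow> bool) \<Rightarrow> bool" where
  "sgraph V E \<longleftrightarrow> finite V \<and> (\<forall>u v. E u v \<longrightarrow> u \<in> V \<and> v \<in> V)
     \<and> (\<forall>u v. E u v \<longrightarrow> E v u) \<and> (\<forall>u. \<not> E u u)"

fun is_walk :: "('a \<Rightarrow> 'a \<Rightarrow> bool) \<Rightarrow> 'a list \<Rightarrow> bool" where
  "is_walk E [] = False"
| "is_walk E [v] = True"
| "is_walk E (u # v # vs) = (E u v \<and> is_walk E (v # vs))"

definition walk_in :: "'a set \<Rightarrow> ('a \<Rightarrow> 'a \<Rightarrow> bool) \<Rightarrow> 'a list \<Rightarrow> bool" where
  "walk_in S E xs \<longleftrightarrow> is_walk E xs \<and> set xs \<subseteq> S"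

definition reachable_in :: "'a set \<Rightarrow> ('a \<Rightarrow> 'a \<Rightarrow> bool) \<Rightarrow> 'a \<Rightarrow> 'a \<Rightarrow> bool" where
  "reachable_in S E u v \<longleftrightarrow> (\<exists>xs. walk_in S E xs \<and> hd xs = u \<and> last xs = v)"

definition connected_graph :: "'a set \<Rightarrow> ('a \<Rightarrow> 'a \<Rightarrow> bool) \<Rightarrow> bool" where
  "connected_graph V E \<longleftrightarrow> (\<forall>u\<in>V. \<forall>v\<in>V. reachable_in V E u v)"

definition is_cycle :: "('a \<Rightarrow> 'a \<Rightarrow> bool) \<Rightarrow> 'a list \<Rightarrow> bool" where
  "is_cycle E vs \<longleftrightarrow> length vs \<ge> 3 \<and> distinct vs \<and> is_walk E vs \<and> E (last vs) (hd vs)"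

definition is_tree :: "'a set \<Rightarrow> ('a \<Rightarrow> 'a \<Rightarrow> bool) \<Rightarrow> bool" where
  "is_tree V E \<longleftrightarrow> sgraph V E \<and> V \<noteq> {} \<and> connected_graph V E
     \<and> \<not> (\<exists>vs. set vs \<subseteq> V \<and> is_cycle E vs)"

definition dist :: "'a set \<Rightarrow> ('a \<Rightarrow> 'a \<Rightarrow> bool) \<Rightarrow> 'a \<Rightarrow> 'a \<Rightarrow> nat" where
  "dist V E u v = (LEAST n. \<exists>xs. walk_in V E xs \<and> hd xs = u \<and> last xs = v \<and> length xs = Suc n)"

definition diameter :: "'a set \<Rightarrow> ('a \<Rightarrow> 'a \<Rightarrow> bool) \<Rightarrow> nat" where
  "diameter V E = Max {dist V E u v | u v. u \<in> V \<and> v \<in> V}"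

text \<open>Wiener index: sum of distances over unordered pairs = half the sum over ordered pairs.\<close>
definition wiener :: "'a set \<Rightarrow> ('a \<Rightarrow> 'a \<Rightarrow> bool) \<Rightarrow> real" where
  "wiener V E = (\<Sum>u\<in>V. \<Sum>v\<in>V. real (dist V E u v)) / 2"

definition degree :: "'a set \<Rightarrow> ('a \<Rightarrow> 'a \<Rightarrow> bool) \<Rightarrow> 'a \<Rightarrow> nat" where
  "degree V E v = card {u \<in> V. E v u}"

definition leaf :: "'a set \<Rightarrow> ('a \<Rightarrow> 'a \<Rightarrow> bool) \<Rightarrow> 'a \<Rightarrow> bool" where
  "leaf V E v \<longleftrightarrow> v \<in> V \<and> degree V E v = 1"

definition broom_vertex :: "'a set \<Rightarrow> ('a \<Rightarrow> 'a \<Rightarrow> bool) \<Rightarrow> 'a \<Rightarrow> bool" where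
  "broom_vertex V E v \<longleftrightarrow> v \<in> V \<and> (\<exists>u. leaf V E u \<and> E v u)"

text \<open>Maximum Wiener index among trees of the same order and diameter
  (trees on the same vertex type; any tree of order |V| has a copy there).\<close>
definition max_wiener :: "'a set \<Rightarrow> ('a \<Rightarrow> 'a \<Rightarrow> bool) \<Rightarrow> bool" where
  "max_wiener V E \<longleftrightarrow> is_tree V E \<and>
     (\<forall>(V'::'a set) E'. is_tree V' E' \<and> card V' = card V \<and> diameter V' E' = diameter V E
        \<longrightarrow> wiener V' E' \<le> wiener V E)"

definition component_minus :: "'a set \<Rightarrow> ('a \<Rightarrow> 'a \<Rightarrow> bool) \<Rightarrow> 'a \<Rightarrow> 'a set \<Rightarrow> bool" where
  "component_minus V E x C \<longleftrightarrow>
     (\<exists>c \<in> V - {x}. C = {v. reachable_in (V - {x}) E c v})"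

definition special_pair :: "'a set \<Rightarrow> ('a \<Rightarrow> 'a \<Rightarrow> bool) \<Rightarrow> 'a \<Rightarrow> 'a set \<Rightarrow> 'a set \<Rightarrow> bool" where
  "special_pair V E x T1 T2 \<longleftrightarrow>
     component_minus V E x T1 \<and> component_minus V E x T2 \<and> T1 \<noteq> T2 \<and>
     card {v \<in> T1. broom_vertex V E v} = 1 \<and> card {v \<in> T2. broom_vertex V E v} = 1 \<and>
     (\<forall>y\<in>T1. \<forall>y'\<in>T2. leaf V E y \<and> leaf V E y' \<longrightarrow> dist V E y y' < diameter V E)"

definition special :: "'a set \<Rightarrow> ('a \<Rightarrow> 'a \<Rightarrow> bool) \<Rightarrow> 'a \<Rightarrow> bool" where
  "special V E x \<longleftrightarrow> x \<in> V \<and> degree V E x \<ge> 3 \<and> (\<exists>T1 T2. special_pair V E x T1 T2)"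

text \<open>(V',E') is the tree obtained from (V,E) by deleting the vertices of T2 and attaching
  |T2| new leaves to y.\<close>
definition relocate :: "'a set \<Rightarrow> ('a \<Rightarrow> 'a \<Rightarrow> bool) \<Rightarrow> 'a set \<Rightarrow> 'a
     \<Rightarrow> 'a set \<Rightarrow> ('a \<Rightarrow> 'a \<Rightarrow> bool) \<Rightarrow> bool" where
  "relocate V E T2 y V' E' \<longleftrightarrow>
     (\<exists>N. finite N \<and> N \<inter> V = {} \<and> card N = card T2 \<and> V' = (V - T2) \<union> N \<and>
        (\<forall>u v. E' u v \<longleftrightarrow> (E u v \<and> u \<in> V - T2 \<and> v \<in> V - T2)
                         \<or> (u = y \<and> v \<in> N) \<or> (v = y \<and> u \<in> N)))"

end

theory Submission
  imports Defs
begin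

text \<open>A component of T - x containing exactly one broom vertex is a broom: a path leaving x
  followed by a bunch of leaves at its end. All distances involving such a component are
  explicit, so W(T') - W(T) becomes a polynomial in p, t1, t2 and the sizes of A and B once the
  two brooms at x are known to have the same length p - 1. That they do is where maximality
  enters: if the spine of T1 were shorter, re-hanging T1 from x to the neighbour of x in a small
  third component (which exists since deg x \<ge> 3) would keep the diameter, because T1 is far
  from every diametral pair, and would increase the Wiener index.\<close>

lemma is_walk_nonempty: "is_walk E xs \<Longrightarrow> xs \<noteq> []"
  by (cases xs) auto

lemma is_walk_Cons: "is_walk E (u # xs) \<longleftrightarrow> (xs = [] \<or> (E u (hd xs) \<and> is_walk E xs))"
  by (cases xs) auto

lemma is_walk_append:
  "is_walk E xs \<Longrightarrow> is_walk E ys \<Longrightarrow> E (last xs) (hd ys) \<Longrightarrow> is_walk E (xs @ ys)"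
proof (induction xs)
  case Nil then show ?case by simp
next
  case (Cons a xs) then show ?case
    by (cases xs) (auto simp: is_walk_Cons is_walk_nonempty)
qed

lemma is_walk_append_shared:
  "is_walk E xs \<Longrightarrow> is_walk E ys \<Longrightarrow> last xs = hd ys \<Longrightarrow> is_walk E (xs @ tl ys)"
proof (induction xs)
  case Nil then show ?case by simp
next
  case (Cons a xs)
  show ?case
  proof (cases xs)
    case Nil
    then show ?thesis using Cons.prems by (cases ys) (auto simp: is_walk_Cons)
  next
    case (Cons b zs)
    then show ?thesis using Cons.prems Cons.IH by (auto simp: is_walk_Cons)
  qed
qed

lemma is_walk_appendD1: "is_walk E (xs @ ys) \<Longrightarrow> xs \<noteq> [] \<Longrightarrow> is_walk E xs"
proof (induction xs)
  case Nil then show ?case by simp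
next
  case (Cons a xs) then show ?case by (cases xs) (auto simp: is_walk_Cons)
qed

lemma is_walk_appendD2: "is_walk E (xs @ ys) \<Longrightarrow> ys \<noteq> [] \<Longrightarrow> is_walk E ys"
proof (induction xs)
  case Nil then show ?case by simp
next
  case (Cons a xs) then show ?case by (cases "xs @ ys") (auto simp: is_walk_Cons)
qed

lemma is_walk_rev:
  assumes "\<And>a b. E a b \<Longrightarrow> E b a"
  shows "is_walk E xs \<Longrightarrow> is_walk E (rev xs)"
proof (induction xs)
  case Nil then show ?case by simp
next
  case (Cons u xs)
  show ?case
  proof (cases xs)
    case Nil then show ?thesis by simp
  next
    case (Cons v vs)
    then have "is_walk E (rev xs)" using Cons.IH Cons.prems by simp
    moreover have "E (last (rev xs)) u" using Cons.prems assms \<open>xs = v # vs\<close> by simp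
    ultimately show ?thesis using is_walk_append[of E "rev xs" "[u]"] by simp
  qed
qed

lemma is_walk_nth: "is_walk E xs \<Longrightarrow> Suc i < length xs \<Longrightarrow> E (xs ! i) (xs ! Suc i)"
proof (induction xs arbitrary: i)
  case Nil then show ?case by simp
next
  case (Cons a xs) then show ?case
    by (cases i) (auto simp: is_walk_Cons hd_conv_nth)
qed

lemma is_walk_mono:
  assumes "is_walk E xs" "\<And>a b. a \<in> set xs \<Longrightarrow> b \<in> set xs \<Longrightarrow> E a b \<Longrightarrow> E' a b"
  shows "is_walk E' xs"
  using assms
proof (induction xs)
  case Nil then show ?case by simp
next
  case (Cons a xs)
  show ?case
  proof (cases xs)
    case Nil then show ?thesis by simp
  next
    case (Cons b zs)
    have w: "is_walk E xs" "E a b" using Cons.prems(1) \<open>xs = b # zs\<close> by auto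
    have "is_walk E' xs" using Cons.IH[OF w(1)] Cons.prems(2) by simp
    moreover have "E' a b" using Cons.prems(2)[of a b] w(2) \<open>xs = b # zs\<close> by simp
    ultimately show ?thesis using \<open>xs = b # zs\<close> by simp
  qed
qed

lemma walk_in_cong:
  assumes "\<And>a b. a \<in> S \<Longrightarrow> b \<in> S \<Longrightarrow> E a b = E' a b"
  shows "walk_in S E xs = walk_in S E' xs"
proof
  assume h: "walk_in S E xs"
  then have "is_walk E' xs" unfolding walk_in_def
    by (intro is_walk_mono[of E xs E']) (use assms in blast)+
  then show "walk_in S E' xs" using h unfolding walk_in_def by blast
next
  assume h: "walk_in S E' xs"
  then have "is_walk E xs" unfolding walk_in_def
    by (intro is_walk_mono[of E' xs E]) (use assms in blast)+
  then show "walk_in S E xs" using h unfolding walk_in_def by blast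
qed

lemma walk_in_cong_fun:
  assumes "\<And>a b. a \<in> S \<Longrightarrow> b \<in> S \<Longrightarrow> E a b = E' a b"
  shows "walk_in S E = walk_in S E'"
  by (rule ext) (rule walk_in_cong[OF assms])

lemma reachable_in_cong:
  assumes "\<And>a b. a \<in> S \<Longrightarrow> b \<in> S \<Longrightarrow> E a b = E' a b"
  shows "reachable_in S E = reachable_in S E'"
  unfolding reachable_in_def[abs_def] by (simp only: walk_in_cong_fun[OF assms])

lemma dist_cong:
  assumes "\<And>a b. a \<in> S \<Longrightarrow> b \<in> S \<Longrightarrow> E a b = E' a b"
  shows "dist S E = dist S E'"
  unfolding dist_def[abs_def] by (simp only: walk_in_cong_fun[OF assms])

lemma connected_cong:
  assumes "\<And>a b. a \<in> S \<Longrightarrow> b \<in> S \<Longrightarrow> E a b = E' a b"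
  shows "connected_graph S E = connected_graph S E'"
  unfolding connected_graph_def by (simp only: reachable_in_cong[OF assms])

lemma reach_refl: "u \<in> S \<Longrightarrow> reachable_in S E u u"
  unfolding reachable_in_def walk_in_def by (rule exI[of _ "[u]"]) auto

lemma reach_vertices: "reachable_in S E u v \<Longrightarrow> u \<in> S \<and> v \<in> S"
  unfolding reachable_in_def walk_in_def
  by (metis empty_iff hd_in_set is_walk.simps(1) last_in_set list.set(1) subsetD)

lemma walk_in_join:
  assumes "walk_in S E xs" "walk_in S E ys" "last xs = hd ys"
  shows "walk_in S E (xs @ tl ys) \<and> hd (xs @ tl ys) = hd xs \<and> last (xs @ tl ys) = last ys
     \<and> length (xs @ tl ys) = length xs + length ys - 1"
proof -
  have ne: "xs \<noteq> []" "ys \<noteq> []" using assms is_walk_nonempty unfolding walk_in_def by blast+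
  have w: "is_walk E (xs @ tl ys)" using assms is_walk_append_shared[of E xs ys] unfolding walk_in_def by blast
  have s: "set (tl ys) \<subseteq> set ys" using ne(2) by (cases ys) auto
  have "set (xs @ tl ys) \<subseteq> S" using assms(1,2) s unfolding walk_in_def by auto
  moreover have "last (xs @ tl ys) = last ys"
  proof (cases "tl ys = []")
    case True
    then have "ys = [hd ys]" using ne(2) by (cases ys) auto
    then show ?thesis using True assms(3) ne(1) by (metis append_Nil2 last_ConsL)
  next
    case False
    then show ?thesis using ne(2) by (simp add: last_tl)
  qed
  moreover have "length ys > 0" using ne(2) by simp
  ultimately show ?thesis using w ne unfolding walk_in_def by (cases ys) auto
qed

lemma reach_trans:
  assumes "reachable_in S E u v" "reachable_in S E v w"
  shows "reachable_in S E u w"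
proof -
  obtain xs where xs: "walk_in S E xs" "hd xs = u" "last xs = v" using assms(1) unfolding reachable_in_def by blast
  obtain ys where ys: "walk_in S E ys" "hd ys = v" "last ys = w" using assms(2) unfolding reachable_in_def by blast
  show ?thesis using walk_in_join[OF xs(1) ys(1)] xs ys unfolding reachable_in_def by metis
qed

lemma reach_step: "E u v \<Longrightarrow> u \<in> S \<Longrightarrow> v \<in> S \<Longrightarrow> reachable_in S E u v"
  unfolding reachable_in_def walk_in_def by (rule exI[of _ "[u,v]"]) auto

lemma reach_sym:
  assumes "\<And>a b. E a b \<Longrightarrow> E b a" "reachable_in S E u v"
  shows "reachable_in S E v u"
proof -
  obtain xs where xs: "walk_in S E xs" "hd xs = u" "last xs = v" using assms(2) unfolding reachable_in_def by blast
  have ne: "xs \<noteq> []" using xs is_walk_nonempty unfolding walk_in_def by blast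
  have "walk_in S E (rev xs)" using xs is_walk_rev[OF assms(1)] unfolding walk_in_def by auto
  then show ?thesis unfolding reachable_in_def using xs ne by (auto simp: hd_rev last_rev)
qed

lemma reach_mono: "reachable_in S E u v \<Longrightarrow> S \<subseteq> S' \<Longrightarrow> reachable_in S' E u v"
  unfolding reachable_in_def walk_in_def by blast

lemma dist_le_walk:
  assumes "walk_in V E xs" "hd xs = u" "last xs = v"
  shows "dist V E u v \<le> length xs - 1"
proof -
  have ne: "xs \<noteq> []" using assms is_walk_nonempty unfolding walk_in_def by blast
  have "length xs = Suc (length xs - 1)" using ne by (cases xs) auto
  then show ?thesis unfolding dist_def using assms by (intro Least_le) blast
qed

lemma dist_walk_ex:
  assumes "reachable_in V E u v"
  shows "\<exists>xs. walk_in V E xs \<and> hd xs = u \<and> last xs = v \<and> length xs = Suc (dist V E u v)"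
proof -
  obtain xs where xs: "walk_in V E xs" "hd xs = u" "last xs = v" using assms unfolding reachable_in_def by blast
  have ne: "xs \<noteq> []" using xs is_walk_nonempty unfolding walk_in_def by blast
  have "length xs = Suc (length xs - 1)" using ne by (cases xs) auto
  then have "\<exists>n xs. walk_in V E xs \<and> hd xs = u \<and> last xs = v \<and> length xs = Suc n" using xs by blast
  then show ?thesis unfolding dist_def by (rule LeastI_ex)
qed

lemma walk_potential_le:
  fixes \<phi> :: "'a \<Rightarrow> int"
  assumes lip: "\<And>a b. E a b \<Longrightarrow> a \<in> V \<Longrightarrow> b \<in> V \<Longrightarrow> \<phi> b - \<phi> a \<le> 1"
  shows "walk_in V E xs \<Longrightarrow> \<phi> (last xs) - \<phi> (hd xs) \<le> int (length xs) - 1"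
  unfolding walk_in_def
proof (induction xs)
  case Nil then show ?case by simp
next
  case (Cons u xs)
  show ?case
  proof (cases xs)
    case Nil then show ?thesis by simp
  next
    case (Cons v vs)
    then have "\<phi> (last xs) - \<phi> v \<le> int (length xs) - 1" using Cons.IH Cons.prems by auto
    moreover have "\<phi> v - \<phi> u \<le> 1" using Cons.prems lip \<open>xs = v # vs\<close> by auto
    ultimately show ?thesis using \<open>xs = v # vs\<close> by simp
  qed
qed

lemma dist_ge_potential:
  fixes \<phi> :: "'a \<Rightarrow> int"
  assumes "reachable_in V E u v"
    and lip: "\<And>a b. E a b \<Longrightarrow> a \<in> V \<Longrightarrow> b \<in> V \<Longrightarrow> \<phi> b - \<phi> a \<le> 1"
  shows "\<phi> v - \<phi> u \<le> int (dist V E u v)"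
proof -
  obtain xs where xs: "walk_in V E xs" "hd xs = u" "last xs = v" "length xs = Suc (dist V E u v)"
    using dist_walk_ex[OF assms(1)] by blast
  show ?thesis using walk_potential_le[OF lip xs(1)] xs by simp
qed

lemma dist_refl: "u \<in> V \<Longrightarrow> dist V E u u = 0"
  using dist_le_walk[of V E "[u]" u u] unfolding walk_in_def by simp

lemma dist_sym:
  assumes "\<And>a b. E a b \<Longrightarrow> E b a"
  shows "dist V E u v = dist V E v u"
proof -
  have key: "dist V E b a \<le> dist V E a b" if r: "reachable_in V E a b" for a b
  proof -
    obtain xs where xs: "walk_in V E xs" "hd xs = a" "last xs = b" "length xs = Suc (dist V E a b)"
      using dist_walk_ex[OF r] by blast
    have ne: "xs \<noteq> []" using xs by auto
    have "walk_in V E (rev xs)" using xs is_walk_rev[OF assms] unfolding walk_in_def by auto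
    from dist_le_walk[OF this] show ?thesis using xs ne by (simp add: hd_rev last_rev)
  qed
  show ?thesis
  proof (cases "reachable_in V E u v")
    case True
    then have "reachable_in V E v u" using reach_sym[of E V u v] assms by blast
    then show ?thesis using key True by (meson le_antisym)
  next
    case False
    then have F2: "\<not> reachable_in V E v u" using reach_sym[of E V v u] assms by blast
    have "\<And>n. \<not> (\<exists>xs. walk_in V E xs \<and> hd xs = u \<and> last xs = v \<and> length xs = Suc n)"
      using False unfolding reachable_in_def by blast
    moreover have "\<And>n. \<not> (\<exists>xs. walk_in V E xs \<and> hd xs = v \<and> last xs = u \<and> length xs = Suc n)"
      using F2 unfolding reachable_in_def by blast
    ultimately have "(\<lambda>n. \<exists>xs. walk_in V E xs \<and> hd xs = u \<and> last xs = v \<and> length xs = Suc n)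
       = (\<lambda>n. \<exists>xs. walk_in V E xs \<and> hd xs = v \<and> last xs = u \<and> length xs = Suc n)"
      by (intro ext) blast
    then show ?thesis unfolding dist_def by simp
  qed
qed

lemma dist_triangle:
  assumes "reachable_in V E u v" "reachable_in V E v w"
  shows "dist V E u w \<le> dist V E u v + dist V E v w"
proof -
  obtain xs where xs: "walk_in V E xs" "hd xs = u" "last xs = v" "length xs = Suc (dist V E u v)"
    using dist_walk_ex[OF assms(1)] by blast
  obtain ys where ys: "walk_in V E ys" "hd ys = v" "last ys = w" "length ys = Suc (dist V E v w)"
    using dist_walk_ex[OF assms(2)] by blast
  note j = walk_in_join[OF xs(1) ys(1)]
  have "dist V E u w \<le> length (xs @ tl ys) - 1" using j xs ys by (intro dist_le_walk) auto
  then show ?thesis using xs ys j by simp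
qed

lemma dist_adj_le: "E u v \<Longrightarrow> u \<in> V \<Longrightarrow> v \<in> V \<Longrightarrow> dist V E u v \<le> 1"
  using dist_le_walk[of V E "[u,v]" u v] unfolding walk_in_def by simp

lemma dist_eq_0:
  assumes "reachable_in V E u v" "dist V E u v = 0" shows "u = v"
proof -
  obtain xs where xs: "walk_in V E xs" "hd xs = u" "last xs = v" "length xs = Suc (dist V E u v)"
    using dist_walk_ex[OF assms(1)] by blast
  then obtain a where "xs = [a]" using assms(2) by (cases xs) auto
  then show ?thesis using xs by simp
qed

lemma dist_eq_1:
  assumes "reachable_in V E u v" "dist V E u v = 1" shows "E u v"
proof -
  obtain xs where xs: "walk_in V E xs" "hd xs = u" "last xs = v" "length xs = Suc (dist V E u v)"
    using dist_walk_ex[OF assms(1)] by blast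
  then obtain a b where "xs = [a, b]" using assms(2)
    by (cases xs; cases "tl xs") auto
  then show ?thesis using xs unfolding walk_in_def by simp
qed

lemma dist_adj:
  assumes "E u v" "u \<in> V" "v \<in> V" "u \<noteq> v" shows "dist V E u v = 1"
proof -
  have r: "reachable_in V E u v" using reach_step assms by metis
  have "dist V E u v \<le> 1" using dist_adj_le assms by metis
  moreover have "dist V E u v \<noteq> 0" using dist_eq_0[OF r] assms(4) by blast
  ultimately show ?thesis by simp
qed

lemma dist_lip:
  assumes "reachable_in V E u a" "E a b" "b \<in> V"
  shows "dist V E u b \<le> dist V E u a + 1"
proof -
  have "a \<in> V" using reach_vertices[OF assms(1)] by blast
  then have "reachable_in V E a b" using reach_step assms by metis
  then have "dist V E u b \<le> dist V E u a + dist V E a b" using dist_triangle assms(1) by metis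
  moreover have "dist V E a b \<le> 1" using dist_adj_le assms \<open>a \<in> V\<close> by metis
  ultimately show ?thesis by simp
qed

lemma dist_mono_set:
  assumes "reachable_in S E u v" "S \<subseteq> V"
  shows "dist V E u v \<le> dist S E u v"
proof -
  obtain xs where xs: "walk_in S E xs" "hd xs = u" "last xs = v" "length xs = Suc (dist S E u v)"
    using dist_walk_ex[OF assms(1)] by blast
  have "walk_in V E xs" using xs assms(2) unfolding walk_in_def by auto
  from dist_le_walk[OF this] show ?thesis using xs by simp
qed

lemma walk_take:
  assumes "walk_in V E xs" "0 < k" "k \<le> length xs"
  shows "walk_in V E (take k xs) \<and> hd (take k xs) = hd xs \<and> last (take k xs) = xs ! (k - 1)
         \<and> length (take k xs) = k"
proof -
  have ne: "take k xs \<noteq> []" using assms by auto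
  have "is_walk E (take k xs @ drop k xs)" using assms(1) unfolding walk_in_def by simp
  then have "is_walk E (take k xs)" using is_walk_appendD1 ne by blast
  moreover have "set (take k xs) \<subseteq> V" using assms(1) set_take_subset unfolding walk_in_def by fast
  moreover have "hd (take k xs) = hd xs" using assms by (cases xs) auto
  moreover have "last (take k xs) = xs ! (k - 1)" using assms ne
    by (simp add: last_conv_nth min_def)
  ultimately show ?thesis using assms unfolding walk_in_def by simp
qed

lemma walk_drop:
  assumes "walk_in V E xs" "k < length xs"
  shows "walk_in V E (drop k xs) \<and> hd (drop k xs) = xs ! k \<and> last (drop k xs) = last xs
         \<and> length (drop k xs) = length xs - k"
proof -
  have ne: "drop k xs \<noteq> []" using assms by auto
  have "is_walk E (take k xs @ drop k xs)" using assms(1) unfolding walk_in_def by simp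
  then have "is_walk E (drop k xs)" using is_walk_appendD2 ne by blast
  moreover have "set (drop k xs) \<subseteq> V" using assms(1) set_drop_subset unfolding walk_in_def by fast
  moreover have "hd (drop k xs) = xs ! k" using assms by (simp add: hd_drop_conv_nth)
  moreover have "last (drop k xs) = last xs" using assms by simp
  ultimately show ?thesis using assms unfolding walk_in_def by simp
qed

lemma shortest_distinct:
  assumes "walk_in V E xs" "length xs = Suc (dist V E (hd xs) (last xs))"
  shows "distinct xs"
proof (rule ccontr)
  assume "\<not> distinct xs"
  then obtain as y bs cs where xs: "xs = as @ [y] @ bs @ [y] @ cs"
    using not_distinct_decomp by blast
  have w: "is_walk E xs" "set xs \<subseteq> V" using assms(1) unfolding walk_in_def by auto
  have w1: "is_walk E (as @ [y])"
    using is_walk_appendD1[of E "as @ [y]" "bs @ [y] @ cs"] w xs by simp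
  have w2: "is_walk E ([y] @ cs)"
    using is_walk_appendD2[of E "as @ [y] @ bs" "[y] @ cs"] w xs by simp
  have w3: "is_walk E ((as @ [y]) @ tl ([y] @ cs))"
    using is_walk_append_shared[OF w1 w2] by simp
  define ys where "ys = as @ [y] @ cs"
  have wy: "walk_in V E ys" using w3 w xs unfolding ys_def walk_in_def by auto
  have "hd ys = hd xs" unfolding ys_def xs by (cases as) auto
  moreover have "last ys = last xs" unfolding ys_def xs by (cases cs) auto
  ultimately have "dist V E (hd xs) (last xs) \<le> length ys - 1"
    using dist_le_walk[OF wy] by metis
  moreover have "length ys < length xs" unfolding ys_def xs by simp
  moreover have "length ys > 0" unfolding ys_def by simp
  ultimately show False using assms(2) by linarith
qed

lemma shortest_nth_dist:
  assumes "walk_in V E xs" "length xs = Suc (dist V E (hd xs) (last xs))" "k < length xs"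
  shows "dist V E (hd xs) (xs ! k) = k"
proof -
  note t = walk_take[OF assms(1), of "Suc k"]
  note dr = walk_drop[OF assms(1) assms(3)]
  have r1: "reachable_in V E (hd xs) (xs ! k)" using t assms(3) unfolding reachable_in_def by fastforce
  have r2: "reachable_in V E (xs ! k) (last xs)" using dr unfolding reachable_in_def by fastforce
  have "dist V E (hd xs) (xs ! k) \<le> k" using t assms(3) dist_le_walk[of V E "take (Suc k) xs"] by simp
  moreover have "dist V E (xs ! k) (last xs) \<le> length xs - 1 - k"
    using dr dist_le_walk[of V E "drop k xs"] by simp
  moreover have "dist V E (hd xs) (last xs) \<le> dist V E (hd xs) (xs ! k) + dist V E (xs ! k) (last xs)"
    using dist_triangle[OF r1 r2] .
  ultimately show ?thesis using assms(2,3) by linarith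
qed

lemma walk_reach_member:
  assumes "walk_in S E xs" "z \<in> set xs"
  shows "reachable_in S E (hd xs) z"
proof -
  obtain k where k: "k < length xs" "xs ! k = z" using assms(2) by (metis in_set_conv_nth)
  note t = walk_take[OF assms(1), of "Suc k"]
  show ?thesis using t k unfolding reachable_in_def by fastforce
qed

lemma diam_set: "{dist V E u v |u v. u \<in> V \<and> v \<in> V} = (\<lambda>(u, v). dist V E u v) ` (V \<times> V)"
  by (auto simp: image_def)

lemma finite_diam_set: "finite V \<Longrightarrow> finite {dist V E u v |u v. u \<in> V \<and> v \<in> V}"
  unfolding diam_set by simp

lemma diam_ge:
  assumes "finite V" "a \<in> V" "b \<in> V" shows "dist V E a b \<le> diameter V E"
proof -
  have "finite {dist V E u v |u v. u \<in> V \<and> v \<in> V}" using finite_diam_set assms(1) .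
  moreover have "dist V E a b \<in> {dist V E u v |u v. u \<in> V \<and> v \<in> V}" using assms(2,3) by (intro CollectI exI conjI) (rule refl)
  ultimately show ?thesis unfolding diameter_def by (rule Max_ge)
qed

lemma diam_attained:
  assumes "finite V" "V \<noteq> {}" obtains a b where "a \<in> V" "b \<in> V" "dist V E a b = diameter V E"
proof -
  have "finite {dist V E u v |u v. u \<in> V \<and> v \<in> V}" using finite_diam_set assms(1) .
  moreover have "{dist V E u v |u v. u \<in> V \<and> v \<in> V} \<noteq> {}" using assms(2) unfolding diam_set by simp
  ultimately have "diameter V E \<in> {dist V E u v |u v. u \<in> V \<and> v \<in> V}" unfolding diameter_def by (rule Max_in)
  then obtain a b where "diameter V E = dist V E a b" "a \<in> V" "b \<in> V" by blast
  then show ?thesis using that by simp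
qed

lemma diam_eqI:
  assumes "finite V" "\<And>a b. a \<in> V \<Longrightarrow> b \<in> V \<Longrightarrow> dist V E a b \<le> D"
    and "a0 \<in> V" "b0 \<in> V" "dist V E a0 b0 = D"
  shows "diameter V E = D"
proof -
  have "finite {dist V E u v |u v. u \<in> V \<and> v \<in> V}" using finite_diam_set assms(1) .
  moreover have "D \<in> {dist V E u v |u v. u \<in> V \<and> v \<in> V}" using assms(3,4,5) by (intro CollectI exI conjI) (rule sym)
  moreover have "\<forall>z \<in> {dist V E u v |u v. u \<in> V \<and> v \<in> V}. z \<le> D" using assms(2) by auto
  ultimately show ?thesis unfolding diameter_def by (intro Max_eqI) auto
qed

lemma sum_split2:
  fixes g :: "'a \<Rightarrow> 'a \<Rightarrow> real"
  assumes "finite V" "S \<subseteq> V"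
  shows "(\<Sum>a\<in>V. \<Sum>b\<in>V. g a b) = (\<Sum>a\<in>S. \<Sum>b\<in>S. g a b) + (\<Sum>a\<in>S. \<Sum>b\<in>V - S. g a b)
          + (\<Sum>a\<in>V - S. \<Sum>b\<in>S. g a b) + (\<Sum>a\<in>V - S. \<Sum>b\<in>V - S. g a b)"
proof -
  have fS: "finite S" using assms finite_subset by blast
  have fR: "finite (V - S)" using assms by simp
  have split: "\<And>h :: 'a \<Rightarrow> real. (\<Sum>b\<in>V. h b) = (\<Sum>b\<in>S. h b) + (\<Sum>b\<in>V - S. h b)"
    using sum.subset_diff[OF assms(2) assms(1)] by (simp add: add.commute)
  have "(\<Sum>a\<in>V. \<Sum>b\<in>V. g a b) = (\<Sum>a\<in>S. \<Sum>b\<in>V. g a b) + (\<Sum>a\<in>V - S. \<Sum>b\<in>V. g a b)"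
    by (rule split)
  also have "(\<Sum>a\<in>S. \<Sum>b\<in>V. g a b) = (\<Sum>a\<in>S. \<Sum>b\<in>S. g a b) + (\<Sum>a\<in>S. \<Sum>b\<in>V - S. g a b)"
    by (simp add: split sum.distrib)
  also have "(\<Sum>a\<in>V - S. \<Sum>b\<in>V. g a b) = (\<Sum>a\<in>V - S. \<Sum>b\<in>S. g a b) + (\<Sum>a\<in>V - S. \<Sum>b\<in>V - S. g a b)"
    by (simp add: split sum.distrib)
  finally show ?thesis by (simp add: algebra_simps)
qed

lemma sum_all_but_one:
  fixes f :: "'a \<Rightarrow> real"
  assumes "finite A" "a \<in> A" "f a = 0" "\<And>b. b \<in> A \<Longrightarrow> b \<noteq> a \<Longrightarrow> f b = c"
  shows "(\<Sum>b\<in>A. f b) = c * (real (card A) - 1)"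
proof -
  have "(\<Sum>b\<in>A - {a}. f b) = (\<Sum>b\<in>A - {a}. c)" using assms(4) by (intro sum.cong refl) auto
  then have "(\<Sum>b\<in>A. f b) = f a + (\<Sum>b\<in>A - {a}. c)" using sum.remove[OF assms(1,2), of f] by simp
  moreover have "card A \<ge> 1" using assms(1,2) by (metis One_nat_def Suc_leI card_gt_0_iff empty_iff)
  ultimately show ?thesis using assms(1-3) by (simp add: card_Diff_singleton of_nat_diff)
qed

lemma gauss_real: "(\<Sum>k=1..m. real k) = real m * (real m + 1) / 2"
  using double_gauss_sum_from_Suc_0[of m, where 'a = real] by simp

lemma gauss_rev: "(\<Sum>k=1..m. real (Suc m) - real k) = real m * (real m + 1) / 2"
proof -
  have "(\<Sum>k=1..m. real (Suc m) - real k) = real m * real (Suc m) - (\<Sum>k=1..m. real k)"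
    by (simp add: sum_subtractf)
  then show ?thesis using gauss_real[of m] by (simp add: algebra_simps)
qed

lemma abs_sum: "(\<Sum>j=1..m. \<Sum>k=1..m. \<bar>real j - real k\<bar>) = (real m - 1) * real m * (real m + 1) / 3"
proof (induction m)
  case 0 then show ?case by simp
next
  case (Suc m)
  let ?g = "\<lambda>j k. \<bar>real j - real k\<bar>"
  have A: "(\<Sum>j=1..Suc m. \<Sum>k=1..Suc m. ?g j k) = (\<Sum>j=1..m. \<Sum>k=1..Suc m. ?g j k) + (\<Sum>k=1..Suc m. ?g (Suc m) k)"
    by simp
  have B: "(\<Sum>j=1..m. \<Sum>k=1..Suc m. ?g j k) = (\<Sum>j=1..m. \<Sum>k=1..m. ?g j k) + (\<Sum>j=1..m. ?g j (Suc m))"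
    by (simp add: sum.distrib)
  have C: "(\<Sum>k=1..Suc m. ?g (Suc m) k) = (\<Sum>k=1..m. ?g (Suc m) k)" by simp
  have D: "(\<Sum>j=1..m. ?g j (Suc m)) = (\<Sum>j=1..m. real (Suc m) - real j)"
    by (rule sum.cong) auto
  have E: "(\<Sum>k=1..m. ?g (Suc m) k) = (\<Sum>j=1..m. real (Suc m) - real j)"
    by (rule sum.cong) auto
  show ?case using A B C D E Suc.IH gauss_rev[of m] by (simp add: algebra_simps add_divide_distrib)
qed

section \<open>Gated subgraphs\<close>

locale gated =
  fixes V S :: "'a set" and E :: "'a \<Rightarrow> 'a \<Rightarrow> bool" and g :: 'a
  assumes sym: "\<And>a b. E a b \<Longrightarrow> E b a"
    and connected_V: "connected_graph V E" and connected_S: "connected_graph S E"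
    and S_subset: "S \<subseteq> V" and gate: "g \<in> S"
    and enter_through_gate: "\<And>z w. z \<in> V - S \<Longrightarrow> w \<in> S \<Longrightarrow> E z w \<Longrightarrow> w = g"
begin

lemma reachable_V: "a \<in> V \<Longrightarrow> b \<in> V \<Longrightarrow> reachable_in V E a b"
  using connected_V unfolding connected_graph_def by blast

lemma reachable_S: "a \<in> S \<Longrightarrow> b \<in> S \<Longrightarrow> reachable_in S E a b"
  using connected_S unfolding connected_graph_def by blast

definition potential :: "'a \<Rightarrow> 'a \<Rightarrow> int" where
  "potential a z = (if z \<in> S then int (dist S E a z) else int (dist S E a g) + int (dist V E g z))"

lemma potential_edge:
  assumes a: "a \<in> S" and e: "E z w" "z \<in> V" "w \<in> V"
  shows "potential a w - potential a z \<le> 1"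
proof (cases "z \<in> S"; cases "w \<in> S")
  assume "z \<in> S" "w \<in> S"
  then show ?thesis using dist_lip[OF reachable_S[OF a \<open>z \<in> S\<close>] e(1)] unfolding potential_def by simp
next
  assume "z \<in> S" "w \<notin> S"
  then have "z = g" using enter_through_gate[of w z] sym[OF e(1)] e(3) by blast
  then show ?thesis using \<open>z \<in> S\<close> \<open>w \<notin> S\<close> dist_adj_le[of E g w V] e unfolding potential_def by simp
next
  assume "z \<notin> S" "w \<in> S"
  then have "w = g" using enter_through_gate[of z w] e by blast
  then show ?thesis using \<open>z \<notin> S\<close> gate unfolding potential_def by simp
next
  assume "z \<notin> S" "w \<notin> S"
  moreover have "dist V E g w \<le> dist V E g z + 1"
    using dist_lip[OF reachable_V[OF _ e(2)] e(1) e(3)] gate S_subset by blast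
  ultimately show ?thesis unfolding potential_def by simp
qed

lemma potential_le_dist:
  assumes "a \<in> S" "b \<in> V"
  shows "potential a b \<le> int (dist V E a b)"
  using dist_ge_potential[OF reachable_V, of a b "potential a"] potential_edge assms S_subset
    dist_refl[of a S E] unfolding potential_def by auto

lemma dist_inside:
  assumes "a \<in> S" "b \<in> S"
  shows "dist V E a b = dist S E a b"
  using dist_mono_set[OF reachable_S[OF assms] S_subset] potential_le_dist[of a b] assms S_subset
  unfolding potential_def by auto

lemma dist_through_gate:
  assumes a: "a \<in> S" and b: "b \<in> V - S"
  shows "dist V E a b = dist V E a g + dist V E g b"
proof (rule antisym)
  show "dist V E a b \<le> dist V E a g + dist V E g b"
    using dist_triangle reachable_V a b gate S_subset by (metis Diff_iff subsetD)
  show "dist V E a g + dist V E g b \<le> dist V E a b"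
    using potential_le_dist[of a b] dist_inside[OF a gate] a b unfolding potential_def by auto
qed

end

lemma connected_graph_gated_part:
  assumes sym: "\<And>a b. E a b \<Longrightarrow> E b a"
    and connected: "connected_graph V E" and S: "S \<subseteq> V" and gate: "g \<in> S"
    and enter_through_gate: "\<And>z w. z \<in> V - S \<Longrightarrow> w \<in> S \<Longrightarrow> E z w \<Longrightarrow> w = g"
  shows "connected_graph S E"
proof -
  define \<pi> where "\<pi> z = (if z \<in> S then z else g)" for z
  have step: "reachable_in S E (\<pi> u) (\<pi> v)" if e: "E u v" "u \<in> V" "v \<in> V" for u v
  proof (cases "u \<in> S \<and> v \<in> S")
    case True
    then show ?thesis using reach_step[of E u v S] e(1) unfolding \<pi>_def by simp
  next
    case False
    then have "\<pi> u = \<pi> v"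
      using enter_through_gate[of u v] enter_through_gate[of v u] e sym unfolding \<pi>_def by auto
    then show ?thesis using reach_refl[of "\<pi> v" S E] gate unfolding \<pi>_def by auto
  qed
  have "walk_in V E xs \<Longrightarrow> reachable_in S E (\<pi> (hd xs)) (\<pi> (last xs))" for xs
    unfolding walk_in_def
  proof (induction xs rule: induct_list012)
    case (2 u)
    then show ?case using reach_refl[of "\<pi> u" S E] gate unfolding \<pi>_def by auto
  next
    case (3 u v vs)
    then have "reachable_in S E (\<pi> u) (\<pi> v)" "reachable_in S E (\<pi> v) (\<pi> (last (v # vs)))"
      using step by auto
    then show ?case by (auto intro: reach_trans)
  qed simp
  then show ?thesis
    using connected S unfolding connected_graph_def reachable_in_def \<pi>_def by (metis subsetD)
qed

section \<open>Gluing two trees along an edge\<close>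

lemma cross_seq: "P (f 0) \<Longrightarrow> \<not> P (f t) \<Longrightarrow> \<exists>k<t. P (f k) \<and> \<not> P (f (Suc k))"
proof (induction t)
  case 0 then show ?case by simp
next
  case (Suc t)
  then show ?case by (cases "P (f t)") (auto intro: less_SucI)
qed

lemma mod_two_step: "(K::nat) < n \<Longrightarrow> 3 \<le> n \<Longrightarrow> ((K + 1) mod n + 1) mod n \<noteq> K"
  by (cases "K + 2 < n"; cases "K + 1 < n") (auto simp: mod_if)

lemma cycle_edges:
  assumes "is_cycle F vs" "i < length vs"
  shows "F (vs ! i) (vs ! ((i + 1) mod length vs))"
proof (cases "i + 1 < length vs")
  case True
  then show ?thesis using is_walk_nth[of F vs i] assms unfolding is_cycle_def by simp
next
  case False
  then have i1: "i + 1 = length vs" using assms by simp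
  then have i: "i = length vs - 1" "(i + 1) mod length vs = 0" by auto
  have ne: "vs \<noteq> []" using assms by auto
  then show ?thesis using assms i unfolding is_cycle_def by (simp add: hd_conv_nth last_conv_nth)
qed

lemma cycle_cross:
  assumes cyc: "is_cycle F vs" and i: "i < length vs" "P (vs ! i)" and j: "j < length vs" "\<not> P (vs ! j)"
  shows "\<exists>K < length vs. P (vs ! K) \<and> \<not> P (vs ! ((K + 1) mod length vs))"
proof -
  let ?n = "length vs"
  define f where "f t = vs ! ((i + t) mod ?n)" for t
  have n: "?n > 0" using i by linarith
  have "f 0 = vs ! i" unfolding f_def using i by simp
  moreover have "f ((j + ?n - i) mod ?n) = vs ! j"
  proof -
    have "(i + (j + ?n - i) mod ?n) mod ?n = (i + (j + ?n - i)) mod ?n" by (simp add: mod_add_right_eq)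
    also have "i + (j + ?n - i) = j + ?n" using i by simp
    also have "(j + ?n) mod ?n = j" using j by simp
    finally show ?thesis unfolding f_def by simp
  qed
  ultimately obtain k where k: "P (f k)" "\<not> P (f (Suc k))"
    using cross_seq[of P f "(j + ?n - i) mod ?n"] i j by auto
  define K where "K = (i + k) mod ?n"
  have "(K + 1) mod ?n = (i + Suc k) mod ?n" unfolding K_def by (simp add: mod_Suc_eq)
  then show ?thesis using k n unfolding f_def K_def[symmetric] by (intro exI[of _ K]) (simp add: K_def)
qed

lemma glue_connected:
  assumes sym: "\<And>a b. F a b \<Longrightarrow> F b a"
    and S: "S \<subseteq> V" "connected_graph S F" and rest: "connected_graph (V - S) F"
    and a0: "a0 \<in> S" and b0: "b0 \<in> V - S" and edge: "F a0 b0"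
  shows "connected_graph V F"
proof -
  have inside: "reachable_in V F u v"
    if "u \<in> S'" "v \<in> S'" "S' \<subseteq> V" "connected_graph S' F" for u v S'
  proof -
    have "reachable_in S' F u v" using that unfolding connected_graph_def by blast
    then show ?thesis using that(3) by (rule reach_mono)
  qed
  have across: "reachable_in V F u v" if "u \<in> S" "v \<in> V - S" for u v
  proof -
    have "reachable_in V F u a0" using inside[where S' = S] S that(1) a0 by blast
    moreover have "reachable_in V F a0 b0" using reach_step[of F a0 b0 V] edge a0 b0 S by blast
    moreover have "reachable_in V F b0 v" using inside[where S' = "V - S"] rest that(2) b0 by blast
    ultimately show ?thesis using reach_trans by metis
  qed
  show ?thesis unfolding connected_graph_def
  proof (intro ballI)
    fix u v assume uv: "u \<in> V" "v \<in> V"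
    show "reachable_in V F u v"
    proof (cases "u \<in> S"; cases "v \<in> S")
      assume "u \<in> S" "v \<in> S"
      then show ?thesis using inside[where S' = S] S by blast
    next
      assume "u \<in> S" "v \<notin> S"
      then show ?thesis using across uv by blast
    next
      assume "u \<notin> S" "v \<in> S"
      then show ?thesis using across[of v u] reach_sym[of F V v u] sym uv by blast
    next
      assume "u \<notin> S" "v \<notin> S"
      then show ?thesis using inside[where S' = "V - S"] rest uv by blast
    qed
  qed
qed

text \<open>A cycle that leaves S has to return to S, so it would use the only edge between S and its
  complement twice.\<close>

lemma glue_acyclic:
  assumes sym: "\<And>a b. F a b \<Longrightarrow> F b a"
    and cross: "\<And>z w. z \<in> S \<Longrightarrow> w \<in> V - S \<Longrightarrow> F z w \<Longrightarrow> z = a0 \<and> w = b0"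
    and vs: "set vs \<subseteq> V" "is_cycle F vs" and i: "i < length vs" "vs ! i \<in> S"
    and j: "j < length vs" "vs ! j \<notin> S"
  shows False
proof -
  let ?n = "length vs"
  have n3: "?n \<ge> 3" and dis: "distinct vs" using vs unfolding is_cycle_def by auto
  then have n: "?n > 0" by linarith
  obtain K where K: "K < ?n" "vs ! K \<in> S" "vs ! ((K + 1) mod ?n) \<notin> S"
    using cycle_cross[of F vs i "\<lambda>z. z \<in> S" j] vs(2) i j by blast
  obtain K' where K': "K' < ?n" "vs ! K' \<notin> S" "vs ! ((K' + 1) mod ?n) \<in> S"
    using cycle_cross[of F vs j "\<lambda>z. z \<notin> S" i] vs(2) i j by blast
  have "vs ! ((K + 1) mod ?n) \<in> V" "vs ! K' \<in> V" using vs(1) n K'(1) by auto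
  then have "vs ! K = a0" "vs ! ((K + 1) mod ?n) = b0" "vs ! ((K' + 1) mod ?n) = a0" "vs ! K' = b0"
    using cross[OF K(2) _ cycle_edges[OF vs(2) K(1)]] K(3)
      cross[OF K'(3) _ sym[OF cycle_edges[OF vs(2) K'(1)]]] K'(2) by auto
  then have "K = (K' + 1) mod ?n" "(K + 1) mod ?n = K'"
    using dis K(1) K'(1) n nth_eq_iff_index_eq by (metis mod_less_divisor)+
  then show False using mod_two_step[OF K(1) n3] by simp
qed

lemma glue_tree:
  assumes sg: "sgraph V F" and "V \<noteq> {}"
    and S: "S \<subseteq> V" "connected_graph S F" and rest: "connected_graph (V - S) F"
    and a0: "a0 \<in> S" and b0: "b0 \<in> V - S" and edge: "F a0 b0"
    and cross: "\<And>z w. z \<in> S \<Longrightarrow> w \<in> V - S \<Longrightarrow> F z w \<Longrightarrow> z = a0 \<and> w = b0"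
    and acyclic_S: "\<not> (\<exists>vs. set vs \<subseteq> S \<and> is_cycle F vs)"
    and acyclic_rest: "\<not> (\<exists>vs. set vs \<subseteq> V - S \<and> is_cycle F vs)"
  shows "is_tree V F"
proof -
  have sym: "\<And>a b. F a b \<Longrightarrow> F b a" using sg unfolding sgraph_def by blast
  have "False" if vs: "set vs \<subseteq> V" "is_cycle F vs" for vs
  proof -
    obtain j where "j < length vs" "vs ! j \<notin> S"
      using acyclic_S vs by (metis in_set_conv_nth subsetI)
    moreover obtain i where "i < length vs" "vs ! i \<in> S"
      using acyclic_rest vs by (metis Diff_iff in_set_conv_nth subsetI subsetD)
    ultimately show False using glue_acyclic[OF sym cross vs] by blast
  qed
  then show ?thesis unfolding is_tree_def
    using sg \<open>V \<noteq> {}\<close> glue_connected[OF sym S rest a0 b0 edge] by blast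
qed

lemma cycle_transfer:
  assumes agree: "\<And>a b. a \<in> S \<Longrightarrow> b \<in> S \<Longrightarrow> F a b = E a b"
    and s: "set vs \<subseteq> S" and c: "is_cycle F vs"
  shows "is_cycle E vs"
proof -
  have w: "is_walk F vs" and l: "length vs \<ge> 3" and d: "distinct vs" and e: "F (last vs) (hd vs)"
    using c unfolding is_cycle_def by auto
  have "is_walk E vs"
  proof (rule is_walk_mono[OF w])
    fix a b assume "a \<in> set vs" "b \<in> set vs" "F a b"
    then show "E a b" using agree s by blast
  qed
  moreover have ne: "vs \<noteq> []" using l by auto
  then have "last vs \<in> S" "hd vs \<in> S" using s by auto
  then have "E (last vs) (hd vs)" using e agree by blast
  ultimately show ?thesis using l d unfolding is_cycle_def by blast
qed

lemma acyclic_transfer: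
  assumes agree: "\<And>a b. a \<in> S \<Longrightarrow> b \<in> S \<Longrightarrow> F a b = E a b"
    and acyclic: "\<not> (\<exists>vs. set vs \<subseteq> V \<and> is_cycle E vs)" and "S \<subseteq> V"
  shows "\<not> (\<exists>vs. set vs \<subseteq> S \<and> is_cycle F vs)"
proof
  assume "\<exists>vs. set vs \<subseteq> S \<and> is_cycle F vs"
  then obtain vs where vs: "set vs \<subseteq> S" "is_cycle F vs" by blast
  then have "is_cycle E vs" using cycle_transfer[OF agree vs] by blast
  then show False using acyclic vs(1) \<open>S \<subseteq> V\<close> by blast
qed

lemma leaf_neighbourE:
  assumes "leaf V E v" obtains w where "{u \<in> V. E v u} = {w}"
  using assms unfolding leaf_def degree_def by (meson card_1_singletonE)

lemma leaf_neighbour_unique: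
  assumes "leaf V E v" "E v a" "E v b" "a \<in> V" "b \<in> V" shows "a = b"
proof -
  obtain w where w: "{u \<in> V. E v u} = {w}" using leaf_neighbourE[OF assms(1)] by blast
  have "a \<in> {u \<in> V. E v u}" "b \<in> {u \<in> V. E v u}" using assms by auto
  then show ?thesis unfolding w by simp
qed

lemma two_neighbours_not_leaf:
  assumes "E v a" "E v b" "a \<in> V" "b \<in> V" "a \<noteq> b" shows "\<not> leaf V E v"
proof
  assume "leaf V E v"
  then show False using leaf_neighbour_unique assms by metis
qed

locale tree =
  fixes V :: "'a set" and E :: "'a \<Rightarrow> 'a \<Rightarrow> bool"
  assumes tree: "is_tree V E"
begin

lemma sg: "sgraph V E" using tree unfolding is_tree_def by blast
lemma fin: "finite V" using sg unfolding sgraph_def by blast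
lemma sym: "E a b \<Longrightarrow> E b a" using sg unfolding sgraph_def by blast
lemma irr: "\<not> E a a" using sg unfolding sgraph_def by blast
lemma edge_in: "E a b \<Longrightarrow> a \<in> V \<and> b \<in> V" using sg unfolding sgraph_def by blast
lemma conn: "connected_graph V E" using tree unfolding is_tree_def by blast
lemma reach: "a \<in> V \<Longrightarrow> b \<in> V \<Longrightarrow> reachable_in V E a b" using conn unfolding connected_graph_def by blast
lemma acyc: "\<not> (\<exists>vs. set vs \<subseteq> V \<and> is_cycle E vs)" using tree unfolding is_tree_def by blast

lemma d_sym: "dist V E a b = dist V E b a" using dist_sym[of E V a b] sym by blast

lemma d_tri: "a \<in> V \<Longrightarrow> b \<in> V \<Longrightarrow> c \<in> V \<Longrightarrow> dist V E a c \<le> dist V E a b + dist V E b c"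
  using dist_triangle reach by metis

lemma d_adj: "E a b \<Longrightarrow> dist V E a b = 1"
  using dist_adj[of E a b V] edge_in irr by metis

lemma d_0: "a \<in> V \<Longrightarrow> b \<in> V \<Longrightarrow> dist V E a b = 0 \<longleftrightarrow> a = b"
  using dist_eq_0 reach dist_refl by metis

lemma d_1: "a \<in> V \<Longrightarrow> b \<in> V \<Longrightarrow> dist V E a b = 1 \<Longrightarrow> E a b"
  using dist_eq_1 reach by metis

lemma d_lip: "a \<in> V \<Longrightarrow> E b c \<Longrightarrow> dist V E a c \<le> dist V E a b + 1"
  using dist_lip reach edge_in by metis

lemma shortest_walk:
  assumes "a \<in> V" "b \<in> V"
  obtains xs where "walk_in V E xs" "hd xs = a" "last xs = b" "length xs = Suc (dist V E a b)"
  using dist_walk_ex[OF reach[OF assms]] by blast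

lemma no_detour:
  assumes e: "E u v" and w: "walk_in V (\<lambda>a b. E a b \<and> {a, b} \<noteq> {u, v}) xs" "hd xs = v" "last xs = u"
  shows False
proof -
  define F where "F = (\<lambda>a b. E a b \<and> {a, b} \<noteq> {u, v})"
  have r: "reachable_in V F v u" using w unfolding reachable_in_def F_def by blast
  obtain ys where ys: "walk_in V F ys" "hd ys = v" "last ys = u" "length ys = Suc (dist V F v u)"
    using dist_walk_ex[OF r] by blast
  have dis: "distinct ys" using shortest_distinct[of V F ys] ys by simp
  have uv: "u \<noteq> v" using e irr by blast
  have ne: "ys \<noteq> []" using ys(4) by auto
  have l3: "length ys \<ge> 3"
  proof (rule ccontr)
    assume "\<not> length ys \<ge> 3"
    moreover have "length ys \<noteq> 0" using ne by simp
    ultimately have "length ys = 1 \<or> length ys = 2" by linarith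
    then show False
    proof
      assume "length ys = 1"
      then obtain a where "ys = [a]" by (cases ys) auto
      then show False using ys uv by simp
    next
      assume "length ys = 2"
      then obtain a c where "ys = [a, c]" by (cases ys; cases "tl ys") auto
      then show False using ys unfolding walk_in_def F_def by auto
    qed
  qed
  have "is_walk E ys" using ys(1) unfolding walk_in_def F_def by (intro is_walk_mono[of F ys E]) (auto simp: F_def)
  moreover have "E (last ys) (hd ys)" using ys e by simp
  ultimately have "is_cycle E ys" using l3 dis unfolding is_cycle_def by simp
  moreover have "set ys \<subseteq> V" using ys(1) unfolding walk_in_def by blast
  ultimately show False using acyc by blast
qed

lemma not_on_shortest:
  assumes P: "walk_in V E P" "hd P = x" "last P = w" "length P = Suc (dist V E x w)"
    and v: "E v w" "dist V E x w \<le> dist V E x v"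
  shows "v \<notin> set P"
proof
  assume "v \<in> set P"
  then obtain i where i: "i < length P" "P ! i = v" by (metis in_set_conv_nth)
  have "dist V E x v = i" using shortest_nth_dist[of V E P i] P i by simp
  then have "i = dist V E x w" using i v P(4) by linarith
  moreover have "P \<noteq> []" using P(4) by auto
  ultimately have "P ! i = last P" using P(4) by (simp add: last_conv_nth)
  then show False using i P(3) v(1) irr by simp
qed

text \<open>Otherwise shortest walks from x to w and to w' avoid v and, together with the edge w' v,
  form a walk from w to v that does not use the edge v w.\<close>

lemma parent_unique:
  assumes x: "x \<in> V" and e: "E v w" "E v w'" and dw: "dist V E x w \<le> dist V E x v"
    and dw': "dist V E x w' \<le> dist V E x v"
  shows "w = w'"
proof (rule ccontr)
  assume neq: "w \<noteq> w'"
  have wV: "w \<in> V" "w' \<in> V" "v \<in> V" using e edge_in by auto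
  obtain P where P: "walk_in V E P" "hd P = x" "last P = w" "length P = Suc (dist V E x w)"
    using shortest_walk[OF x wV(1)] by blast
  obtain P' where P': "walk_in V E P'" "hd P' = x" "last P' = w'" "length P' = Suc (dist V E x w')"
    using shortest_walk[OF x wV(2)] by blast
  have vP: "v \<notin> set P" using not_on_shortest[OF P e(1) dw] .
  have vP': "v \<notin> set P'" using not_on_shortest[OF P' e(2) dw'] .
  have neP: "P \<noteq> []" using P(4) by auto
  have rP: "walk_in V E (rev P)" using P(1) is_walk_rev[of E P] sym unfolding walk_in_def by auto
  have j: "walk_in V E (rev P @ tl P') \<and> hd (rev P @ tl P') = w \<and> last (rev P @ tl P') = w'"
    using walk_in_join[OF rP P'(1)] P P' neP by (simp add: hd_rev last_rev)
  define F where "F = (\<lambda>a b. E a b \<and> {a, b} \<noteq> {v, w})"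
  have "set (tl P') \<subseteq> set P'" by (cases P') auto
  then have sQ: "set (rev P @ tl P') \<subseteq> set P \<union> set P'" by auto
  have vQ: "v \<notin> set (rev P @ tl P')" using sQ vP vP' by blast
  have mono: "F a b" if "a \<in> set (rev P @ tl P')" "b \<in> set (rev P @ tl P')" "E a b" for a b
  proof -
    have "a \<noteq> v" "b \<noteq> v" using that vQ by auto
    then have "{a, b} \<noteq> {v, w}" by (metis insertCI insertE singletonD)
    then show ?thesis unfolding F_def using that by blast
  qed
  have wF: "is_walk F (rev P @ tl P')"
    using j unfolding walk_in_def by (intro is_walk_mono[of E _ F] mono) auto
  have neQ: "rev P @ tl P' \<noteq> []" using neP by simp
  have "F w' v" unfolding F_def using sym[OF e(2)] neq irr by (auto simp: doubleton_eq_iff)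
  then have "is_walk F ((rev P @ tl P') @ [v])"
    using is_walk_append[OF wF, of "[v]"] j by simp
  moreover have "set ((rev P @ tl P') @ [v]) \<subseteq> V" using j wV unfolding walk_in_def by auto
  ultimately have "walk_in V F ((rev P @ tl P') @ [v])" unfolding walk_in_def by blast
  moreover have "hd ((rev P @ tl P') @ [v]) = w" using j neQ by (metis hd_append2)
  moreover have "last ((rev P @ tl P') @ [v]) = v" by simp
  ultimately show False using no_detour[OF e(1)] unfolding F_def by blast
qed

lemma pred_exists:
  assumes x: "x \<in> V" and v: "v \<in> V" "v \<noteq> x"
  obtains q where "E q v" "dist V E x q + 1 = dist V E x v"
proof -
  obtain P where P: "walk_in V E P" "hd P = x" "last P = v" "length P = Suc (dist V E x v)"
    using shortest_walk[OF x v(1)] by blast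
  have "dist V E x v \<noteq> 0" using d_0 x v by metis
  then obtain n where n: "dist V E x v = Suc n" by (cases "dist V E x v") auto
  have e: "E (P ! n) (P ! Suc n)" using is_walk_nth[of E P n] P n unfolding walk_in_def by simp
  have "P \<noteq> []" using P(4) by auto
  then have "last P = P ! (length P - 1)" by (rule last_conv_nth)
  then have "P ! Suc n = v" using P n by simp
  moreover have "dist V E x (P ! n) = n" using shortest_nth_dist[of V E P n] P n by simp
  ultimately show ?thesis using that e n by simp
qed

lemma farther_neighbour:
  assumes x: "x \<in> V" and v: "v \<in> V" "v \<noteq> x" "\<not> leaf V E v"
  obtains w where "E v w" "dist V E x w = Suc (dist V E x v)"
proof -
  obtain q where q: "E q v" "dist V E x q + 1 = dist V E x v" using pred_exists[OF x v(1,2)] by blast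
  have "q \<in> {u \<in> V. E v u}" using q(1) sym edge_in by blast
  moreover have "{u \<in> V. E v u} \<noteq> {q}" using v(1,3) unfolding leaf_def degree_def by auto
  ultimately obtain w where w: "w \<in> V" "E v w" "w \<noteq> q" by blast
  have "\<not> dist V E x w \<le> dist V E x v"
    using parent_unique[OF x w(2) sym[OF q(1)]] q(2) w(3) by auto
  moreover have "dist V E x w \<le> dist V E x v + 1" using d_lip[OF x w(2)] .
  ultimately show ?thesis using that w(2) by simp
qed

end

section \<open>Components of T - x\<close>

locale component = tree +
  fixes x :: 'a and C :: "'a set"
  assumes xV: "x \<in> V" and is_component: "component_minus V E x C"
begin

definition croot where "croot = (SOME c. c \<in> V - {x} \<and> C = {v. reachable_in (V - {x}) E c v})"

lemma croot: "croot \<in> V - {x}" "C = {v. reachable_in (V - {x}) E croot v}"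
proof -
  have "\<exists>c. c \<in> V - {x} \<and> C = {v. reachable_in (V - {x}) E c v}" using is_component unfolding component_minus_def by blast
  then have "croot \<in> V - {x} \<and> C = {v. reachable_in (V - {x}) E croot v}" unfolding croot_def by (rule someI_ex)
  then show "croot \<in> V - {x}" "C = {v. reachable_in (V - {x}) E croot v}" by auto
qed

lemma C_sub: "C \<subseteq> V - {x}"
proof
  fix v assume "v \<in> C"
  then have "reachable_in (V - {x}) E croot v" using croot(2) by blast
  from reach_vertices[OF this] show "v \<in> V - {x}" by blast
qed

lemma C_eq_from: assumes "a \<in> C" shows "C = {v. reachable_in (V - {x}) E a v}"
proof -
  have ra: "reachable_in (V - {x}) E croot a" using assms croot(2) by blast
  then have ar: "reachable_in (V - {x}) E a croot" using reach_sym[of E] sym by blast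
  show ?thesis using croot(2) reach_trans[OF ra] reach_trans[OF ar] by blast
qed

lemma C_reach: "a \<in> C \<Longrightarrow> b \<in> C \<Longrightarrow> reachable_in (V - {x}) E a b"
  using C_eq_from by blast

lemma C_closed: assumes "a \<in> C" "E a b" "b \<noteq> x" shows "b \<in> C"
proof -
  have "reachable_in (V - {x}) E a b" using reach_step[of E a b "V - {x}"] assms edge_in C_sub by blast
  then show ?thesis using C_eq_from[OF assms(1)] by blast
qed

lemma C_conn: "connected_graph C E"
  unfolding connected_graph_def
proof (intro ballI)
  fix a b assume ab: "a \<in> C" "b \<in> C"
  then obtain xs where xs: "walk_in (V - {x}) E xs" "hd xs = a" "last xs = b"
    using C_reach unfolding reachable_in_def by blast
  have "set xs \<subseteq> C"
  proof
    fix z assume "z \<in> set xs"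
    then have "reachable_in (V - {x}) E a z" using walk_reach_member[OF xs(1)] xs(2) by blast
    then show "z \<in> C" using C_eq_from[OF ab(1)] by blast
  qed
  then show "reachable_in C E a b" using xs unfolding reachable_in_def walk_in_def by blast
qed

lemma C_nbr_ex: "\<exists>c \<in> C. E x c"
proof -
  have c: "croot \<in> V" "croot \<noteq> x" using croot by auto
  obtain q where q: "E q x" "dist V E croot q + 1 = dist V E croot x"
    using pred_exists[OF c(1) xV] c by metis
  obtain Q where Q: "walk_in V E Q" "hd Q = croot" "last Q = q" "length Q = Suc (dist V E croot q)"
    using shortest_walk[OF c(1)] edge_in q(1) by metis
  have "x \<notin> set Q"
  proof
    assume "x \<in> set Q"
    then obtain i where i: "i < length Q" "Q ! i = x" by (metis in_set_conv_nth)
    have "dist V E croot x = i" using shortest_nth_dist[of V E Q i] Q i by simp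
    then show False using q(2) i Q(4) by simp
  qed
  then have "walk_in (V - {x}) E Q" using Q(1) unfolding walk_in_def by blast
  then have "q \<in> C" using Q croot(2) unfolding reachable_in_def by blast
  then show ?thesis using sym[OF q(1)] by blast
qed

lemma C_nbr_unique:
  assumes c: "c \<in> C" "c' \<in> C" "E x c" "E x c'" shows "c = c'"
proof (rule ccontr)
  assume neq: "c \<noteq> c'"
  obtain W where W: "walk_in C E W" "hd W = c" "last W = c'"
    using C_conn c unfolding connected_graph_def reachable_in_def by blast
  have neW: "W \<noteq> []" using W(1) is_walk_nonempty unfolding walk_in_def by blast
  define F where "F = (\<lambda>a b. E a b \<and> {a, b} \<noteq> {c', x})"
  have xW: "x \<notin> set W" using W(1) C_sub unfolding walk_in_def by blast
  have mono: "F a b" if "a \<in> set W" "b \<in> set W" "E a b" for a b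
  proof -
    have "a \<noteq> x" "b \<noteq> x" using that xW by auto
    then have "{a, b} \<noteq> {c', x}" by (metis insertCI insertE singletonD)
    then show ?thesis unfolding F_def using that by blast
  qed
  have "is_walk F W" using W(1) unfolding walk_in_def by (intro is_walk_mono[of E _ F] mono) auto
  moreover have "F x c" unfolding F_def using c(3) neq irr by (auto simp: doubleton_eq_iff)
  ultimately have "is_walk F (x # W)" using W(2) neW by (cases W) auto
  moreover have "set (x # W) \<subseteq> V" using W(1) C_sub xV unfolding walk_in_def by auto
  ultimately have "walk_in V F (x # W)" unfolding walk_in_def by blast
  moreover have "last (x # W) = c'" using W neW by simp
  moreover have "hd (x # W) = x" by simp
  ultimately show False using no_detour[OF sym[OF c(4)]] unfolding F_def by blast
qed

definition c0 where "c0 = (THE c. c \<in> C \<and> E x c)"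

lemma c0: "c0 \<in> C" "E x c0"
proof -
  have "\<exists>!c. c \<in> C \<and> E x c" using C_nbr_ex C_nbr_unique by blast
  then have "c0 \<in> C \<and> E x c0" unfolding c0_def by (rule theI')
  then show "c0 \<in> C" "E x c0" by auto
qed

lemma C_cross: assumes "z \<in> V" "z \<notin> C" "w \<in> C" "E z w" shows "z = x \<and> w = c0"
proof -
  have "z = x" using C_closed[OF assms(3) sym[OF assms(4)]] assms(2) by blast
  then show ?thesis using C_nbr_unique[OF assms(3) c0(1)] assms(4) c0(2) by blast
qed

lemma gated_C: "gated V C E c0"
  unfolding gated_def using sym conn C_conn C_sub c0(1) C_cross by blast

lemma VC_cross: "z \<in> V - (V - C) \<Longrightarrow> w \<in> V - C \<Longrightarrow> E z w \<Longrightarrow> w = x"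
  using C_closed by blast

lemma VC_conn: "connected_graph (V - C) E"
  using connected_graph_gated_part[of E V "V - C" x] sym conn xV C_sub VC_cross by blast

lemma gated_rest: "gated V (V - C) E x"
  unfolding gated_def using sym conn VC_conn xV C_sub VC_cross by blast

lemma dist_C: "a \<in> C \<Longrightarrow> b \<in> C \<Longrightarrow> dist V E a b = dist C E a b"
  using gated.dist_inside[OF gated_C] .

lemma dist_VC: "a \<in> V - C \<Longrightarrow> b \<in> V - C \<Longrightarrow> dist V E a b = dist (V - C) E a b"
  using gated.dist_inside[OF gated_rest] .

lemma dist_out: assumes "a \<in> C" "b \<in> V" "b \<notin> C"
  shows "dist V E a b = dist V E a x + dist V E x b"
proof -
  have "dist V E b a = dist V E b x + dist V E x a"
    using gated.dist_through_gate[OF gated_rest, of b a] assms C_sub by blast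
  then show ?thesis using d_sym by simp
qed

lemma dist_x: assumes "a \<in> C" shows "dist V E a x = dist V E a c0 + 1"
proof -
  have "dist V E a x = dist V E a c0 + dist V E c0 x"
    using gated.dist_through_gate[OF gated_C, of a x] assms C_sub xV by blast
  then show ?thesis using d_adj[OF sym[OF c0(2)]] by simp
qed

lemma sum_dist_across:
  "(\<Sum>a\<in>V. \<Sum>b\<in>V. real (dist V E a b)) =
     (\<Sum>a\<in>V - C. \<Sum>b\<in>V - C. real (dist (V - C) E a b))
     + 2 * (real (card C) * (\<Sum>a\<in>V - C. real (dist V E a x))
            + real (card (V - C)) * (\<Sum>w\<in>C. real (dist V E x w)))
     + (\<Sum>a\<in>C. \<Sum>b\<in>C. real (dist V E a b))"
proof -
  let ?d = "\<lambda>a b. real (dist V E a b)"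
  have "V - (V - C) = C" using C_sub by blast
  then have split: "(\<Sum>a\<in>V. \<Sum>b\<in>V. ?d a b) = (\<Sum>a\<in>V - C. \<Sum>b\<in>V - C. ?d a b)
      + (\<Sum>a\<in>V - C. \<Sum>b\<in>C. ?d a b) + (\<Sum>a\<in>C. \<Sum>b\<in>V - C. ?d a b) + (\<Sum>a\<in>C. \<Sum>b\<in>C. ?d a b)"
    using sum_split2[OF fin, of "V - C" ?d] by simp
  have inside: "(\<Sum>a\<in>V - C. \<Sum>b\<in>V - C. ?d a b) = (\<Sum>a\<in>V - C. \<Sum>b\<in>V - C. real (dist (V - C) E a b))"
    by (intro sum.cong refl) (simp add: dist_VC)
  have through_x: "?d a b = ?d a x + ?d x b" if "a \<in> V - C" "b \<in> C" for a b
    using dist_out[of b a] that d_sym[of a b] d_sym[of b x] d_sym[of x a] by simp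
  have "(\<Sum>a\<in>V - C. \<Sum>b\<in>C. ?d a b) = (\<Sum>a\<in>V - C. \<Sum>b\<in>C. ?d a x + ?d x b)"
    using through_x by (intro sum.cong refl) simp
  then have across: "(\<Sum>a\<in>V - C. \<Sum>b\<in>C. ?d a b)
      = real (card C) * (\<Sum>a\<in>V - C. ?d a x) + real (card (V - C)) * (\<Sum>w\<in>C. ?d x w)"
    by (simp add: sum.distrib sum_distrib_left algebra_simps)
  have "(\<Sum>a\<in>C. \<Sum>b\<in>V - C. ?d a b) = (\<Sum>b\<in>V - C. \<Sum>a\<in>C. ?d b a)"
    using d_sym by (subst sum.swap) simp
  then show ?thesis using split inside across by simp
qed

end

lemma component_disjoint:
  assumes "component V E x C" "component V E x C'" "C \<noteq> C'" shows "C \<inter> C' = {}"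
proof (rule ccontr)
  assume "C \<inter> C' \<noteq> {}"
  then obtain z where z: "z \<in> C" "z \<in> C'" by blast
  have "C = {v. reachable_in (V - {x}) E z v}" using component.C_eq_from[OF assms(1) z(1)] .
  moreover have "C' = {v. reachable_in (V - {x}) E z v}" using component.C_eq_from[OF assms(2) z(2)] .
  ultimately show False using assms(3) by simp
qed

section \<open>Brooms\<close>

text \<open>A component C of T - x with a single broom vertex bv consists of a shortest path
  x = P ! 0, ..., P ! m = bv and the set L of leaves attached to bv; the paper's p is m + 1.\<close>

locale broom = component +
  assumes one_broom: "card {v \<in> C. broom_vertex V E v} = 1"
    and x_not_leaf: "\<not> leaf V E x"
begin

definition bv where "bv = (THE v. v \<in> C \<and> broom_vertex V E v)"

lemma bv: "bv \<in> C" "broom_vertex V E bv" "\<And>v. v \<in> C \<Longrightarrow> broom_vertex V E v \<Longrightarrow> v = bv"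
proof -
  obtain z where "{v \<in> C. broom_vertex V E v} = {z}" using one_broom card_1_singletonE by blast
  then have unique: "\<exists>!v. v \<in> C \<and> broom_vertex V E v" by (auto simp: set_eq_iff)
  then have "bv \<in> C \<and> broom_vertex V E bv" unfolding bv_def by (rule theI')
  then show "bv \<in> C" "broom_vertex V E bv" "\<And>v. v \<in> C \<Longrightarrow> broom_vertex V E v \<Longrightarrow> v = bv"
    using unique by auto
qed

lemma bvV: "bv \<in> V" "bv \<noteq> x" using bv(1) C_sub by auto

definition m where "m = dist V E x bv"

definition P where "P = (SOME xs. walk_in V E xs \<and> hd xs = x \<and> last xs = bv \<and> length xs = Suc m)"

lemma P: "walk_in V E P" "hd P = x" "last P = bv" "length P = Suc m"
proof -
  have "\<exists>xs. walk_in V E xs \<and> hd xs = x \<and> last xs = bv \<and> length xs = Suc m"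
    using shortest_walk[OF xV bvV(1)] unfolding m_def by metis
  then have "walk_in V E P \<and> hd P = x \<and> last P = bv \<and> length P = Suc m"
    unfolding P_def by (rule someI_ex)
  then show "walk_in V E P" "hd P = x" "last P = bv" "length P = Suc m" by auto
qed

lemma P_short: "length P = Suc (dist V E (hd P) (last P))"
  using P unfolding m_def by simp

lemma P_dist: "k \<le> m \<Longrightarrow> dist V E x (P ! k) = k"
  using shortest_nth_dist[OF P(1) P_short, of k] P by simp

lemma P_distinct: "distinct P"
  using shortest_distinct[OF P(1) P_short] .

lemma P_ne: "P \<noteq> []" using P(4) by auto

lemma P0: "P ! 0 = x" using P(2) P_ne by (simp add: hd_conv_nth)

lemma Pm: "P ! m = bv"
proof -
  have "last P = P ! (length P - 1)" using P_ne by (rule last_conv_nth)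
  then show ?thesis using P by simp
qed

lemma m_pos: "1 \<le> m"
proof -
  have "dist V E x bv \<noteq> 0" using d_0[OF xV bvV(1)] bvV(2) by simp
  then show ?thesis unfolding m_def by simp
qed

lemma P_edge: "k < m \<Longrightarrow> E (P ! k) (P ! Suc k)"
  using is_walk_nth[of E P k] P unfolding walk_in_def by simp

lemma P_V: "k \<le> m \<Longrightarrow> P ! k \<in> V"
  using P nth_mem[of k P] unfolding walk_in_def by auto

lemma P_eq: "i \<le> m \<Longrightarrow> j \<le> m \<Longrightarrow> P ! i = P ! j \<longleftrightarrow> i = j"
  using nth_eq_iff_index_eq[OF P_distinct] P(4) by simp

lemma P_C: assumes "1 \<le> k" "k \<le> m" shows "P ! k \<in> C"
proof -
  have k: "k < length P" using assms P(4) by simp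
  have dr: "walk_in V E (drop k P)" "hd (drop k P) = P ! k" "last (drop k P) = bv"
    using walk_drop[OF P(1) k] P(3) by auto
  have "x \<notin> set (drop k P)"
  proof
    assume "x \<in> set (drop k P)"
    then obtain i where i: "i < length (drop k P)" "drop k P ! i = x" unfolding in_set_conv_nth by blast
    then have "P ! (k + i) = P ! 0" using P0 k by simp
    moreover have "k + i \<le> m" using i P(4) by simp
    ultimately show False using P_eq[of "k + i" 0] assms by simp
  qed
  then have "set (drop k P) \<subseteq> V - {x}" using dr(1) unfolding walk_in_def by auto
  then have "walk_in (V - {x}) E (drop k P)" using dr(1) unfolding walk_in_def by simp
  then have "reachable_in (V - {x}) E (P ! k) bv" using dr unfolding reachable_in_def by blast
  then have "reachable_in (V - {x}) E bv (P ! k)" using reach_sym[of E "V - {x}" "P ! k" bv] sym by blast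
  then show ?thesis by (subst C_eq_from[OF bv(1)]) simp
qed

definition L where "L = {v. leaf V E v \<and> E bv v}"

lemma L_leaf: assumes "l \<in> L" shows "leaf V E l" "E bv l" "E l bv" "l \<in> V"
proof -
  show "leaf V E l" "E bv l" using assms unfolding L_def by auto
  then show "E l bv" using sym by blast
  show "l \<in> V" using edge_in \<open>E bv l\<close> by blast
qed

lemma L_nbr: assumes "l \<in> L" "E l a" shows "a = bv"
proof -
  have "a \<in> V" using edge_in assms(2) by blast
  then show ?thesis using leaf_neighbour_unique[of V E l a bv] L_leaf[OF assms(1)] assms(2) bvV by blast
qed

lemma L_notx: assumes "l \<in> L" shows "l \<noteq> x"
proof
  assume "l = x"
  then show False using x_not_leaf L_leaf(1)[OF assms] by simp
qed

lemma L_C: "L \<subseteq> C"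
proof
  fix l assume "l \<in> L"
  show "l \<in> C" by (rule C_closed[OF bv(1) L_leaf(2)[OF \<open>l \<in> L\<close>] L_notx[OF \<open>l \<in> L\<close>]])
qed

lemma L_ne: "L \<noteq> {}"
  using bv(2) unfolding broom_vertex_def L_def by blast

lemma L_fin: "finite L"
proof -
  have "L \<subseteq> V" using L_C C_sub by blast
  then show ?thesis using fin by (rule finite_subset)
qed

lemma P_nonleaf_lt: assumes "1 \<le> k" "k < m" shows "\<not> leaf V E (P ! k)"
proof -
  have e1: "E (P ! k) (P ! (k - 1))" using sym[OF P_edge[of "k - 1"]] assms by simp
  have e2: "E (P ! k) (P ! Suc k)" using P_edge assms by simp
  have ne: "P ! (k - 1) \<noteq> P ! Suc k" using P_eq[of "k - 1" "Suc k"] assms by simp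
  have "P ! (k - 1) \<in> V" "P ! Suc k \<in> V" using edge_in e1 e2 by auto
  then show ?thesis using two_neighbours_not_leaf[of E "P ! k" "P ! (k - 1)" "P ! Suc k"] e1 e2 ne by blast
qed

lemma P_nonleaf: assumes "1 \<le> k" "k \<le> m" shows "\<not> leaf V E (P ! k)"
proof (cases "k < m")
  case True then show ?thesis using P_nonleaf_lt assms by simp
next
  case False
  then have k: "k = m" using assms by simp
  obtain l where l: "l \<in> L" using L_ne by blast
  have e1: "E (P ! m) (P ! (m - 1))" using sym[OF P_edge[of "m - 1"]] m_pos by simp
  have e2: "E (P ! m) l" using L_leaf(2)[OF l] Pm by simp
  have ne: "P ! (m - 1) \<noteq> l"
  proof (cases "m - 1 = 0")
    case True then show ?thesis using P0 L_leaf(1)[OF l] x_not_leaf by auto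
  next
    case False
    then have "\<not> leaf V E (P ! (m - 1))" using P_nonleaf_lt[of "m - 1"] m_pos by simp
    then show ?thesis using L_leaf(1)[OF l] by auto
  qed
  have "P ! (m - 1) \<in> V" "l \<in> V" using edge_in e1 e2 by auto
  then show ?thesis using two_neighbours_not_leaf[of E "P ! m" "P ! (m - 1)" l] e1 e2 ne k by blast
qed

lemma L_dist: assumes "l \<in> L" shows "dist V E x l = Suc m"
proof -
  obtain q where q: "E q l" "dist V E x q + 1 = dist V E x l"
    using pred_exists[OF xV L_leaf(4)[OF assms] L_notx[OF assms]] by blast
  have "q = bv" using L_nbr[OF assms sym[OF q(1)]] .
  then show ?thesis using q(2) unfolding m_def by simp
qed

lemma PL_disj: "(\<lambda>k. P ! k) ` {1..m} \<inter> L = {}"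
  using P_nonleaf L_leaf(1) by fastforce

lemma C_leaf_in_L:
  assumes v: "v \<in> C" "leaf V E v"
  shows "v \<in> L"
proof -
  have vV: "v \<in> V" "v \<noteq> x" using v C_sub by auto
  obtain q where q: "E q v" "dist V E x q + 1 = dist V E x v" using pred_exists[OF xV vV] by blast
  have only_q: "\<And>a. E v a \<Longrightarrow> a = q" using leaf_neighbour_unique[OF v(2)] sym[OF q(1)] edge_in by blast
  have "q \<noteq> x"
  proof
    assume "q = x"
    have "bv \<noteq> v"
      using bv(2) only_q \<open>q = x\<close> x_not_leaf unfolding broom_vertex_def by blast
    obtain W where W: "walk_in (V - {x}) E W" "hd W = v" "last W = bv"
      using C_reach[OF v(1) bv(1)] unfolding reachable_in_def by blast
    then obtain w W' where "W = v # w # W'"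
      using \<open>bv \<noteq> v\<close> is_walk_nonempty unfolding walk_in_def
      by (metis last.simps list.exhaust_sel list.sel(1))
    then show False using W(1) only_q \<open>q = x\<close> unfolding walk_in_def by auto
  qed
  then have "q \<in> C" using C_closed[OF v(1) sym[OF q(1)]] by blast
  moreover have "broom_vertex V E q" unfolding broom_vertex_def using v(2) q(1) edge_in by blast
  ultimately have "q = bv" using bv(3) by blast
  then show ?thesis unfolding L_def using v(2) q(1) by blast
qed

lemma leaves_C: "{v \<in> C. leaf V E v} = L"
  using C_leaf_in_L L_C L_leaf(1) by blast

lemma spine_back_neighbour:
  assumes k: "1 \<le> k" "k \<le> m" and u: "E (P ! k) u" "dist V E x u \<le> k"
  shows "u = P ! (k - 1)"
proof -
  have "E (P ! k) (P ! (k - 1))" using sym[OF P_edge[of "k - 1"]] k by simp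
  then show ?thesis using parent_unique[OF xV u(1)] u(2) P_dist[of k] P_dist[of "k - 1"] k by simp
qed

text \<open>A vertex of C off the spine and off L that is farthest from x would have a
  neighbour still farther away, off the spine and off L as well.\<close>

lemma C_decomp: "C = (\<lambda>k. P ! k) ` {1..m} \<union> L"
proof
  show "(\<lambda>k. P ! k) ` {1..m} \<union> L \<subseteq> C" using P_C L_C by auto
next
  show "C \<subseteq> (\<lambda>k. P ! k) ` {1..m} \<union> L"
  proof (rule ccontr)
    define X where "X = C - ((\<lambda>k. P ! k) ` {1..m} \<union> L)"
    assume "\<not> C \<subseteq> (\<lambda>k. P ! k) ` {1..m} \<union> L"
    then have "X \<noteq> {}" unfolding X_def by blast
    moreover have "finite X" unfolding X_def using C_sub fin finite_subset by blast
    ultimately obtain v where v: "v \<in> X" "dist V E x v = Max (dist V E x ` X)"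
      using Max_in[of "dist V E x ` X"] by (metis finite_imageI image_iff image_is_empty)
    have far: "\<And>v'. v' \<in> X \<Longrightarrow> dist V E x v' \<le> dist V E x v" using v(2) \<open>finite X\<close> by simp
    have vC: "v \<in> C" "v \<notin> L" "v \<notin> (\<lambda>k. P ! k) ` {1..m}" using v(1) unfolding X_def by auto
    have vV: "v \<in> V" "v \<noteq> x" using vC C_sub by auto
    obtain w where w: "E v w" "dist V E x w = Suc (dist V E x v)"
      using farther_neighbour[OF xV vV] C_leaf_in_L vC by blast
    have "w \<noteq> x" using w(2) dist_refl[OF xV, of E] by auto
    then have "w \<in> C" using C_closed[OF vC(1) w(1)] by blast
    moreover have "w \<notin> L"
      using L_nbr[of w v] sym[OF w(1)] vC(3) Pm m_pos by force
    moreover have "w \<notin> (\<lambda>k. P ! k) ` {1..m}"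
    proof
      assume "w \<in> (\<lambda>k. P ! k) ` {1..m}"
      then obtain k where k: "1 \<le> k" "k \<le> m" "w = P ! k" by auto
      then have "dist V E x v = k - 1" using w(2) P_dist by simp
      moreover have "dist V E x v \<noteq> 0" using d_0[OF xV vV(1)] vV(2) by simp
      ultimately have "v = P ! (k - 1)" "2 \<le> k"
        using spine_back_neighbour[OF k(1,2)] sym[OF w(1)] k(3) by auto
      then show False using vC(3) k by force
    qed
    ultimately have "w \<in> X" unfolding X_def by blast
    then show False using far w(2) by fastforce
  qed
qed

lemma P_inj: "inj_on (\<lambda>k. P ! k) {0..m}"
  unfolding inj_on_def using P_eq by auto

lemma card_C: "card C = m + card L"
proof -
  have "card ((\<lambda>k. P ! k) ` {1..m}) = m"
    using card_image[OF inj_on_subset[OF P_inj]] by auto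
  then show ?thesis using C_decomp PL_disj L_fin card_Un_disjoint[of "(\<lambda>k. P ! k) ` {1..m}" L] by simp
qed

lemma dist_spine_le: "j + i \<le> m \<Longrightarrow> dist V E (P ! j) (P ! (j + i)) \<le> i"
proof (induction i)
  case 0 then show ?case using dist_refl[OF P_V] by simp
next
  case (Suc i)
  have "dist V E (P ! j) (P ! (j + Suc i)) \<le> dist V E (P ! j) (P ! (j + i)) + dist V E (P ! (j + i)) (P ! (j + Suc i))"
    using d_tri P_V Suc.prems by simp
  moreover have "dist V E (P ! (j + i)) (P ! (j + Suc i)) = 1" using d_adj[OF P_edge[of "j + i"]] Suc.prems by simp
  ultimately show ?case using Suc by simp
qed

lemma dist_spine: assumes "j \<le> k" "k \<le> m" shows "dist V E (P ! j) (P ! k) = k - j"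
proof (rule antisym)
  show "dist V E (P ! j) (P ! k) \<le> k - j" using dist_spine_le[of j "k - j"] assms by simp
next
  have "dist V E x (P ! k) \<le> dist V E x (P ! j) + dist V E (P ! j) (P ! k)"
    using d_tri xV P_V assms by simp
  then show "k - j \<le> dist V E (P ! j) (P ! k)" using P_dist assms by simp
qed

lemma dist_spine_abs: assumes "j \<le> m" "k \<le> m" shows "dist V E (P ! j) (P ! k) = (if j \<le> k then k - j else j - k)"
proof (cases "j \<le> k")
  case True then show ?thesis using dist_spine assms by simp
next
  case False then show ?thesis using dist_spine[of k j] assms d_sym[of "P ! j" "P ! k"] by simp
qed

lemma dist_spine_L: assumes "k \<le> m" "l \<in> L" shows "dist V E (P ! k) l = Suc m - k"
proof (rule antisym)
  have "dist V E (P ! k) l \<le> dist V E (P ! k) (P ! m) + dist V E (P ! m) l"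
    using d_tri P_V L_leaf(4) assms by simp
  moreover have "dist V E (P ! m) l = 1" using d_adj L_leaf(2)[OF assms(2)] Pm by simp
  ultimately show "dist V E (P ! k) l \<le> Suc m - k" using dist_spine[of k m] assms by simp
next
  have "dist V E x l \<le> dist V E x (P ! k) + dist V E (P ! k) l"
    using d_tri xV P_V L_leaf(4) assms by simp
  then show "Suc m - k \<le> dist V E (P ! k) l" using P_dist L_dist assms by simp
qed

lemma dist_L_L: assumes "l \<in> L" "l' \<in> L" "l \<noteq> l'" shows "dist V E l l' = 2"
proof -
  have "dist V E l l' \<le> dist V E l bv + dist V E bv l'"
    using d_tri L_leaf(4) bvV assms by simp
  moreover have "dist V E l bv = 1" "dist V E bv l' = 1" using d_adj L_leaf assms by auto
  ultimately have le: "dist V E l l' \<le> 2" by simp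
  have n0: "dist V E l l' \<noteq> 0" using d_0 L_leaf(4) assms by simp
  have n1: "dist V E l l' \<noteq> 1"
  proof
    assume "dist V E l l' = 1"
    then have "E l l'" using d_1 L_leaf(4) assms by simp
    then have "l' = bv" using L_nbr assms by simp
    then have "bv \<in> L" using assms by simp
    then show False using P_nonleaf[of m] m_pos Pm L_leaf(1) by simp
  qed
  show ?thesis using le n0 n1 by simp
qed

lemma C_dist_x: assumes "v \<in> C" shows "dist V E x v \<le> Suc m"
proof -
  have "v \<in> (\<lambda>k. P ! k) ` {1..m} \<or> v \<in> L" using assms C_decomp by blast
  then show ?thesis
  proof
    assume "v \<in> (\<lambda>k. P ! k) ` {1..m}"
    then obtain k where "k \<in> {1..m}" "v = P ! k" by blast
    then show ?thesis using P_dist[of k] by simp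
  qed (use L_dist in simp)
qed

lemma sum_C_split: "(\<Sum>v\<in>C. f v) = (\<Sum>k=1..m. f (P ! k)) + (\<Sum>l\<in>L. f l)"
proof -
  have inj: "inj_on (\<lambda>k. P ! k) {1..m}" using inj_on_subset[OF P_inj] by auto
  have "(\<Sum>v\<in>C. f v) = (\<Sum>v\<in>(\<lambda>k. P ! k) ` {1..m} \<union> L. f v)"
    by (subst C_decomp) (rule refl)
  also have "\<dots> = (\<Sum>v\<in>(\<lambda>k. P ! k) ` {1..m}. f v) + (\<Sum>l\<in>L. f l)"
    by (rule sum.union_disjoint) (use L_fin PL_disj in auto)
  also have "(\<Sum>v\<in>(\<lambda>k. P ! k) ` {1..m}. f v) = (\<Sum>k=1..m. f (P ! k))"
    using sum.reindex[OF inj] by simp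
  finally show ?thesis .
qed

lemma sum_dist_x_C: "(\<Sum>v\<in>C. real (dist V E x v)) = real m * (real m + 1) / 2 + real (card L) * (real m + 1)"
proof -
  have "(\<Sum>k=1..m. real (dist V E x (P ! k))) = (\<Sum>k=1..m. real k)"
    by (rule sum.cong) (auto simp: P_dist)
  moreover have "(\<Sum>l\<in>L. real (dist V E x l)) = (\<Sum>l\<in>L. real m + 1)"
    by (rule sum.cong) (auto simp: L_dist)
  ultimately show ?thesis using sum_C_split[of "\<lambda>v. real (dist V E x v)"] gauss_real[of m] by simp
qed

lemma sum_shift_to_bv: "(\<Sum>v\<in>C. real (dist V E v bv) - real (dist V E v x)) = - (real m * (real (card L) + 1))"
proof -
  have "(\<Sum>k=1..m. real (dist V E (P ! k) bv) - real (dist V E (P ! k) x)) = (\<Sum>k=1..m. real m - 2 * real k)"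
  proof (rule sum.cong)
    fix k assume k: "k \<in> {1..m}"
    have "dist V E (P ! k) bv = m - k" using dist_spine[of k m] k Pm by simp
    moreover have "dist V E (P ! k) x = k" using P_dist[of k] k d_sym by simp
    ultimately show "real (dist V E (P ! k) bv) - real (dist V E (P ! k) x) = real m - 2 * real k"
      using k by (simp add: of_nat_diff)
  qed simp
  also have "\<dots> = real m * real m - 2 * (\<Sum>k=1..m. real k)"
    by (simp add: sum_subtractf sum_distrib_left)
  also have "\<dots> = - real m" using gauss_real[of m] by (simp add: algebra_simps)
  finally have A: "(\<Sum>k=1..m. real (dist V E (P ! k) bv) - real (dist V E (P ! k) x)) = - real m" .
  have "(\<Sum>l\<in>L. real (dist V E l bv) - real (dist V E l x)) = (\<Sum>l\<in>L. - real m)"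
  proof (rule sum.cong)
    fix l assume l: "l \<in> L"
    have "dist V E l bv = 1" using d_adj[OF L_leaf(3)[OF l]] .
    moreover have "dist V E l x = Suc m" using L_dist[OF l] d_sym by simp
    ultimately show "real (dist V E l bv) - real (dist V E l x) = - real m" by simp
  qed simp
  then show ?thesis using A sum_C_split[of "\<lambda>v. real (dist V E v bv) - real (dist V E v x)"]
    by (simp add: algebra_simps)
qed

lemma sum_dist_L: assumes l: "l \<in> L" shows "(\<Sum>l'\<in>L. real (dist V E l l')) = 2 * (real (card L) - 1)"
  using sum_all_but_one[OF L_fin l] dist_refl[OF L_leaf(4)[OF l]] dist_L_L[OF l] by simp

lemma sum_dist_C: "(\<Sum>a\<in>C. \<Sum>b\<in>C. real (dist V E a b)) =
   (real m - 1) * real m * (real m + 1) / 3 + real (card L) * real m * (real m + 1)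
   + 2 * real (card L) * (real (card L) - 1)"
proof -
  let ?t = "real (card L)"
  have row_P: "(\<Sum>b\<in>C. real (dist V E (P ! j) b)) = (\<Sum>k=1..m. \<bar>real j - real k\<bar>) + ?t * (real (Suc m) - real j)"
    if j: "j \<in> {1..m}" for j
  proof -
    have "(\<Sum>k=1..m. real (dist V E (P ! j) (P ! k))) = (\<Sum>k=1..m. \<bar>real j - real k\<bar>)"
      by (rule sum.cong) (use j in \<open>auto simp: dist_spine_abs of_nat_diff\<close>)
    moreover have "(\<Sum>l\<in>L. real (dist V E (P ! j) l)) = (\<Sum>l\<in>L. real (Suc m) - real j)"
      by (rule sum.cong) (use j in \<open>auto simp: dist_spine_L of_nat_diff\<close>)
    ultimately show ?thesis using sum_C_split[of "\<lambda>b. real (dist V E (P ! j) b)"] by simp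
  qed
  have row_L: "(\<Sum>b\<in>C. real (dist V E l b)) = real m * (real m + 1) / 2 + 2 * (?t - 1)"
    if l: "l \<in> L" for l
  proof -
    have "(\<Sum>k=1..m. real (dist V E l (P ! k))) = (\<Sum>k=1..m. real (Suc m) - real k)"
      by (rule sum.cong) (use l in \<open>auto simp: dist_spine_L d_sym[of l] of_nat_diff\<close>)
    then show ?thesis using sum_C_split[of "\<lambda>b. real (dist V E l b)"] sum_dist_L[OF l] gauss_rev[of m] by simp
  qed
  have "(\<Sum>a\<in>C. \<Sum>b\<in>C. real (dist V E a b)) =
      (\<Sum>j=1..m. \<Sum>b\<in>C. real (dist V E (P ! j) b)) + (\<Sum>l\<in>L. \<Sum>b\<in>C. real (dist V E l b))"
    using sum_C_split[of "\<lambda>a. \<Sum>b\<in>C. real (dist V E a b)"] by simp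
  also have "(\<Sum>j=1..m. \<Sum>b\<in>C. real (dist V E (P ! j) b)) =
      (\<Sum>j=1..m. (\<Sum>k=1..m. \<bar>real j - real k\<bar>) + ?t * (real (Suc m) - real j))"
    by (rule sum.cong) (simp_all add: row_P)
  also have "\<dots> = (real m - 1) * real m * (real m + 1) / 3 + ?t * (real m * (real m + 1) / 2)"
  proof -
    have sp: "(\<Sum>j=1..m. (\<Sum>k=1..m. \<bar>real j - real k\<bar>) + ?t * (real (Suc m) - real j))
       = (\<Sum>j=1..m. \<Sum>k=1..m. \<bar>real j - real k\<bar>) + ?t * (\<Sum>j=1..m. real (Suc m) - real j)"
      by (simp only: sum.distrib sum_distrib_left)
    show ?thesis unfolding sp abs_sum gauss_rev ..
  qed
  also have "(\<Sum>l\<in>L. \<Sum>b\<in>C. real (dist V E l b)) = (\<Sum>l\<in>L. real m * (real m + 1) / 2 + 2 * (?t - 1))"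
    by (rule sum.cong) (simp_all add: row_L)
  also have "\<dots> = ?t * (real m * (real m + 1) / 2 + 2 * (?t - 1))" by simp
  finally show ?thesis by (simp add: algebra_simps)
qed

end

section \<open>Re-hanging a component\<close>

locale rehang = T: component V E x T1 + K: component V E x C
  for V :: "'a set" and E x T1 C +
  assumes disj: "C \<inter> T1 = {}"
begin

text \<open>F re-hangs T1 from x to the neighbour of x in C.\<close>

definition F where "F a b = ((E a b \<and> {a, b} \<noteq> {T.c0, x}) \<or> {a, b} = {T.c0, K.c0})"

lemma c0_facts: "K.c0 \<in> V" "K.c0 \<notin> T1" "K.c0 \<noteq> x" "T.c0 \<in> T1" "T.c0 \<noteq> K.c0" "T.c0 \<in> V" "T.c0 \<noteq> x"
  using K.c0 T.c0 disj K.C_sub T.C_sub by auto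

lemma F_sym: "F a b \<Longrightarrow> F b a" unfolding F_def using T.sym by (auto simp: insert_commute)

lemma F_irr: "\<not> F a a" unfolding F_def using T.irr c0_facts by (auto simp: doubleton_eq_iff)

lemma F_in: "F a b \<Longrightarrow> a \<in> V \<and> b \<in> V"
  unfolding F_def using T.edge_in c0_facts by (auto simp: doubleton_eq_iff)

lemma F_sgraph: "sgraph V F"
  unfolding sgraph_def using T.fin F_in F_sym F_irr by blast

lemma agree_T1: assumes "a \<in> T1" "b \<in> T1" shows "F a b = E a b"
proof -
  have "x \<notin> T1" "K.c0 \<notin> T1" using T.C_sub c0_facts by auto
  then have "{a, b} \<noteq> {T.c0, x}" "{a, b} \<noteq> {T.c0, K.c0}" using assms by (auto simp: doubleton_eq_iff)
  then show ?thesis unfolding F_def by simp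
qed

lemma agree_rest: assumes "a \<in> V - T1" "b \<in> V - T1" shows "F a b = E a b"
proof -
  have "T.c0 \<notin> V - T1" using c0_facts by auto
  then have "{a, b} \<noteq> {T.c0, x}" "{a, b} \<noteq> {T.c0, K.c0}" using assms by (auto simp: doubleton_eq_iff)
  then show ?thesis unfolding F_def by simp
qed

lemma F_cross: assumes "z \<in> T1" "w \<in> V - T1" "F z w" shows "z = T.c0 \<and> w = K.c0"
proof (cases "{z, w} = {T.c0, K.c0}")
  case True
  then show ?thesis using assms(1) c0_facts by (auto simp: doubleton_eq_iff)
next
  case False
  then have e: "E z w" "{z, w} \<noteq> {T.c0, x}" using assms(3) unfolding F_def by auto
  have "w = x \<and> z = T.c0" using T.C_cross[of w z] assms(1,2) T.sym[OF e(1)] by blast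
  then show ?thesis using e(2) by auto
qed

lemma F_edge: "F T.c0 K.c0" unfolding F_def by simp

lemma conn_T1: "connected_graph T1 F"
  using T.C_conn connected_cong[of T1 F E] agree_T1 by blast

lemma conn_rest: "connected_graph (V - T1) F"
  using T.VC_conn connected_cong[of "V - T1" F E] agree_rest by blast

lemma F_tree: "is_tree V F"
proof (rule glue_tree[OF F_sgraph _ _ conn_T1 conn_rest _ _ F_edge F_cross])
  show "T1 \<subseteq> V" using T.C_sub by blast
  then show "\<not> (\<exists>vs. set vs \<subseteq> T1 \<and> is_cycle F vs)"
    using acyclic_transfer[OF agree_T1 T.acyc] by blast
  show "\<not> (\<exists>vs. set vs \<subseteq> V - T1 \<and> is_cycle F vs)"
    using acyclic_transfer[OF agree_rest T.acyc] by blast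
  show "V \<noteq> {}" "T.c0 \<in> T1" "K.c0 \<in> V - T1" using T.xV c0_facts by auto
qed

lemma F_conn: "connected_graph V F" using F_tree unfolding is_tree_def by blast

lemma gated_rest: "gated V (V - T1) F K.c0"
  unfolding gated_def using F_sym F_conn conn_rest c0_facts F_cross by blast

lemma gated_T1: "gated V T1 F T.c0"
proof -
  have "\<And>z w. z \<in> V - T1 \<Longrightarrow> w \<in> T1 \<Longrightarrow> F z w \<Longrightarrow> w = T.c0" using F_cross F_sym by blast
  then show ?thesis unfolding gated_def using F_sym F_conn conn_T1 c0_facts T.C_sub by blast
qed

lemma dist_F_rest: assumes "a \<in> V - T1" "b \<in> V - T1" shows "dist V F a b = dist V E a b"
proof -
  have "dist V F a b = dist (V - T1) F a b" using gated.dist_inside[OF gated_rest assms] .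
  also have "\<dots> = dist (V - T1) E a b" using dist_cong[of "V - T1" F E] agree_rest by metis
  also have "\<dots> = dist V E a b" using T.dist_VC[OF assms] by simp
  finally show ?thesis .
qed

lemma dist_F_T1: assumes "a \<in> T1" "b \<in> T1" shows "dist V F a b = dist V E a b"
proof -
  have "dist V F a b = dist T1 F a b" using gated.dist_inside[OF gated_T1 assms] .
  also have "\<dots> = dist T1 E a b" using dist_cong[of T1 F E] agree_T1 by metis
  also have "\<dots> = dist V E a b" using T.dist_C[OF assms] by simp
  finally show ?thesis .
qed

lemma dist_F_across: assumes a: "a \<in> T1" and b: "b \<in> V - T1"
  shows "dist V F a b = dist V E a x + dist V E K.c0 b"
proof -
  have "dist V F b a = dist V F b K.c0 + dist V F K.c0 a"
    using gated.dist_through_gate[OF gated_rest, of b a] a b T.C_sub by blast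
  moreover have "dist V F b K.c0 = dist V E b K.c0" using dist_F_rest b c0_facts by simp
  moreover have "dist V F a K.c0 = dist V F a T.c0 + dist V F T.c0 K.c0"
    using gated.dist_through_gate[OF gated_T1, of a K.c0] a c0_facts by blast
  moreover have "dist V F T.c0 K.c0 = 1" using dist_adj[of F T.c0 K.c0 V] F_edge c0_facts by simp
  moreover have "dist V F a T.c0 = dist V E a T.c0" using dist_F_T1 a c0_facts by simp
  moreover have "dist V E a x = dist V E a T.c0 + 1" using T.dist_x[OF a] .
  moreover have "dist V F K.c0 a = dist V F a K.c0" using dist_sym[of F] F_sym by blast
  moreover have "dist V F b a = dist V F a b" using dist_sym[of F] F_sym by blast
  moreover have "dist V E b K.c0 = dist V E K.c0 b" using T.d_sym by blast
  ultimately show ?thesis by simp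
qed

lemma dist_E_across: assumes a: "a \<in> T1" and b: "b \<in> V - T1"
  shows "dist V E a b = dist V E a x + dist V E x b"
  using T.dist_out a b by blast

lemma dist_c0_in: assumes "b \<in> C" shows "dist V E x b = dist V E K.c0 b + 1"
  using K.dist_x[OF assms] T.d_sym by simp

lemma dist_c0_out: assumes "b \<in> V" "b \<notin> C" shows "dist V E K.c0 b = dist V E x b + 1"
proof -
  have "dist V E K.c0 b = dist V E K.c0 x + dist V E x b" using K.dist_out[OF K.c0(1) assms] .
  moreover have "dist V E K.c0 x = 1" using T.d_adj[OF T.sym[OF K.c0(2)]] .
  ultimately show ?thesis by simp
qed

lemma sum_dist_shift:
  "(\<Sum>b\<in>V - T1. real (dist V E K.c0 b) - real (dist V E x b)) = real (card (V - T1)) - 2 * real (card C)"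
proof -
  let ?h = "\<lambda>b. real (dist V E K.c0 b) - real (dist V E x b)"
  have fin: "finite (V - T1)" using T.fin by simp
  have CR: "C \<subseteq> V - T1" using K.C_sub disj by blast
  have "(\<Sum>b\<in>V - T1. ?h b) = (\<Sum>b\<in>C. ?h b) + (\<Sum>b\<in>V - T1 - C. ?h b)"
    using sum.subset_diff[OF CR fin] by (simp add: add.commute)
  also have "(\<Sum>b\<in>C. ?h b) = (\<Sum>b\<in>C. - 1)" using dist_c0_in by (intro sum.cong refl) simp
  also have "(\<Sum>b\<in>V - T1 - C. ?h b) = (\<Sum>b\<in>V - T1 - C. 1)" using dist_c0_out by (intro sum.cong refl) simp
  finally show ?thesis
    using card_Diff_subset[OF finite_subset[OF CR fin] CR] card_mono[OF fin CR] by (simp add: of_nat_diff)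
qed

text \<open>Only distances between T1 and the rest change, each by the shift of the attachment
  point from x to the neighbour of x in C.\<close>

lemma wiener_diff:
  "wiener V F - wiener V E = real (card T1) * (real (card (V - T1)) - 2 * real (card C))"
proof -
  let ?R = "V - T1"
  define g where "g a b = real (dist V F a b) - real (dist V E a b)" for a b
  define h where "h b = real (dist V E K.c0 b) - real (dist V E x b)" for b
  have T1V: "T1 \<subseteq> V" using T.C_sub by blast
  have "g a b = 0" if "a \<in> T1 \<and> b \<in> T1 \<or> a \<in> ?R \<and> b \<in> ?R" for a b
    using that dist_F_T1 dist_F_rest unfolding g_def by auto
  then have same_side: "(\<Sum>a\<in>T1. \<Sum>b\<in>T1. g a b) = 0" "(\<Sum>a\<in>?R. \<Sum>b\<in>?R. g a b) = 0"
    by (simp_all add: sum.neutral)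
  have across: "g a b = h b" "g b a = h b" if "a \<in> T1" "b \<in> ?R" for a b
    using that dist_F_across dist_E_across dist_sym[of F V a b] F_sym T.d_sym[of a b] unfolding g_def h_def by auto
  have "(\<Sum>a\<in>T1. \<Sum>b\<in>?R. g a b) = (\<Sum>a\<in>T1. \<Sum>b\<in>?R. h b)"
    using across by (intro sum.cong refl) simp
  moreover have "(\<Sum>a\<in>?R. \<Sum>b\<in>T1. g a b) = (\<Sum>a\<in>T1. \<Sum>b\<in>?R. h b)"
    using across by (subst sum.swap) (intro sum.cong refl; simp)
  ultimately have "(\<Sum>a\<in>V. \<Sum>b\<in>V. g a b) = 2 * (real (card T1) * (\<Sum>b\<in>?R. h b))"
    using sum_split2[OF T.fin T1V, of g] same_side by simp
  moreover have "(\<Sum>a\<in>V. \<Sum>b\<in>V. g a b)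
      = (\<Sum>a\<in>V. \<Sum>b\<in>V. real (dist V F a b)) - (\<Sum>a\<in>V. \<Sum>b\<in>V. real (dist V E a b))"
    unfolding g_def by (simp add: sum_subtractf)
  ultimately show ?thesis
    using sum_dist_shift unfolding wiener_def h_def by (simp add: diff_divide_distrib[symmetric])
qed

lemma wiener_increases:
  assumes "2 * card C + card T1 < card V"
  shows "wiener V E < wiener V F"
proof -
  have "T1 \<noteq> {}" "finite T1" using T.c0(1) T.fin T.C_sub finite_subset by blast+
  then have "real (card T1) > 0" by (simp add: card_gt_0_iff)
  moreover have "card (V - T1) = card V - card T1"
    using card_Diff_subset[OF \<open>finite T1\<close>] T.C_sub by blast
  then have "real (card (V - T1)) - 2 * real (card C) > 0" using assms by simp
  ultimately have "real (card T1) * (real (card (V - T1)) - 2 * real (card C)) > 0"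
    by (rule mult_pos_pos)
  then show ?thesis using wiener_diff by simp
qed

text \<open>Distances change only between T1 and the rest, and there they grow by at most one and stay
  below the diameter; a diametral pair avoids T1 and keeps its distance.\<close>

lemma diameter_unchanged:
  assumes far: "\<And>a b. a \<in> T1 \<Longrightarrow> b \<in> V \<Longrightarrow> dist V E a x + dist V E x b < diameter V E"
  shows "diameter V F = diameter V E"
proof -
  have short: "dist V E a b < diameter V E" if "a \<in> T1" "b \<in> V" for a b
  proof -
    have "a \<in> V" using T.C_sub that(1) by blast
    then have "dist V E a b \<le> dist V E a x + dist V E x b" using T.d_tri T.xV that(2) by blast
    then show ?thesis using far[OF that] by linarith
  qed
  have across: "dist V F a b \<le> diameter V E" if "a \<in> T1" "b \<in> V - T1" for a b
  proof -
    have "dist V E K.c0 b \<le> dist V E x b + 1"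
      using dist_c0_in[of b] dist_c0_out[of b] that by (cases "b \<in> C") auto
    then show ?thesis using dist_F_across[OF that] far[of a b] that by simp
  qed
  have bound: "dist V F a b \<le> diameter V E" if ab: "a \<in> V" "b \<in> V" for a b
  proof (cases "a \<in> T1"; cases "b \<in> T1")
    assume "a \<in> T1" "b \<in> T1"
    then show ?thesis using dist_F_T1 diam_ge[OF T.fin ab] by simp
  next
    assume "a \<in> T1" "b \<notin> T1"
    then show ?thesis using across ab by blast
  next
    assume "a \<notin> T1" "b \<in> T1"
    then show ?thesis using across[of b a] dist_sym[of F V a b] F_sym ab by simp
  next
    assume "a \<notin> T1" "b \<notin> T1"
    then show ?thesis using dist_F_rest diam_ge[OF T.fin ab] ab by simp
  qed
  obtain a0 b0 where ab0: "a0 \<in> V" "b0 \<in> V" "dist V E a0 b0 = diameter V E"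
    using diam_attained[OF T.fin] T.xV by blast
  then have "a0 \<notin> T1" "b0 \<notin> T1" using short[of a0 b0] short[of b0 a0] T.d_sym[of a0 b0] by auto
  then have "dist V F a0 b0 = diameter V E" using dist_F_rest ab0 by simp
  then show ?thesis using diam_eqI[OF T.fin bound ab0(1,2)] by blast
qed

end

section \<open>Attaching pendant leaves\<close>

locale leaf_attachment =
  fixes S N :: "'a set" and E E' :: "'a \<Rightarrow> 'a \<Rightarrow> bool" and y :: 'a
  assumes symE: "\<And>a b. E a b \<Longrightarrow> E b a"
    and cS: "connected_graph S E" and yS: "y \<in> S" and disj: "N \<inter> S = {}"
    and E'_iff: "\<And>u v. E' u v \<longleftrightarrow> (E u v \<and> u \<in> S \<and> v \<in> S) \<or> (u = y \<and> v \<in> N) \<or> (v = y \<and> u \<in> N)"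
begin

lemma E'_sym: "E' a b \<Longrightarrow> E' b a" using E'_iff[of a b] E'_iff[of b a] symE[of a b] by auto

lemma agree: "a \<in> S \<Longrightarrow> b \<in> S \<Longrightarrow> E' a b = E a b"
  using E'_iff[of a b] disj yS by auto

lemma connected_S': "connected_graph S E'"
  using cS connected_cong[of S E' E] agree by blast

lemma reachable_y: assumes "a \<in> S \<union> N" shows "reachable_in (S \<union> N) E' a y"
proof (cases "a \<in> S")
  case True
  then have "reachable_in S E' a y" using connected_S' yS unfolding connected_graph_def by blast
  then show ?thesis by (rule reach_mono) blast
next
  case False
  then have "a \<in> N" using assms by blast
  then have "E' a y" using E'_iff[of a y] by simp
  then show ?thesis using reach_step[of E' a y "S \<union> N"] assms yS by blast
qed

lemma connected': "connected_graph (S \<union> N) E'"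
  unfolding connected_graph_def
proof (intro ballI)
  fix a b assume "a \<in> S \<union> N" "b \<in> S \<union> N"
  then have "reachable_in (S \<union> N) E' a y" "reachable_in (S \<union> N) E' y b"
    using reachable_y reach_sym[of E' "S \<union> N" b y] E'_sym by blast+
  then show "reachable_in (S \<union> N) E' a b" by (rule reach_trans)
qed

lemma gated_S: "gated (S \<union> N) S E' y"
proof -
  have "\<And>z w. z \<in> S \<union> N - S \<Longrightarrow> w \<in> S \<Longrightarrow> E' z w \<Longrightarrow> w = y"
  proof -
    fix z w assume h: "z \<in> S \<union> N - S" "w \<in> S" "E' z w"
    then have "z \<in> N" "z \<noteq> y" "w \<notin> N" "z \<notin> S" using disj yS by auto
    then show "w = y" using h(3) E'_iff[of z w] by simp
  qed
  then show ?thesis unfolding gated_def using E'_sym connected' connected_S' yS by blast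
qed

lemma dist_S_cong: "dist S E' = dist S E"
  by (rule dist_cong) (rule agree)

lemma dist_old: "a \<in> S \<Longrightarrow> b \<in> S \<Longrightarrow> dist (S \<union> N) E' a b = dist S E a b"
  using gated.dist_inside[OF gated_S, of a b] unfolding dist_S_cong by simp

lemma dist_old_new: assumes "a \<in> S" "l \<in> N" shows "dist (S \<union> N) E' a l = dist S E a y + 1"
proof -
  have "dist (S \<union> N) E' a l = dist (S \<union> N) E' a y + dist (S \<union> N) E' y l"
    using gated.dist_through_gate[OF gated_S, of a l] assms disj by blast
  moreover have "dist (S \<union> N) E' a y = dist S E a y" using dist_old assms yS by blast
  moreover have "dist (S \<union> N) E' y l = 1"
  proof -
    have "E' y l" using E'_iff[of y l] assms by simp
    moreover have "y \<noteq> l" using assms yS disj by blast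
    ultimately show ?thesis using dist_adj[of E' y l "S \<union> N"] assms yS by blast
  qed
  ultimately show ?thesis by simp
qed

lemma dist_new_new: assumes "l \<in> N" "l' \<in> N" "l \<noteq> l'" shows "dist (S \<union> N) E' l l' = 2"
proof -
  have inV: "l \<in> S \<union> N" "l' \<in> S \<union> N" "y \<in> S \<union> N" using assms yS by auto
  have r1: "reachable_in (S \<union> N) E' l y" and r2: "reachable_in (S \<union> N) E' y l'"
    and r3: "reachable_in (S \<union> N) E' l l'"
    using connected' inV unfolding connected_graph_def by blast+
  have ny: "y \<noteq> l'" "l \<noteq> y" using assms yS disj by blast+
  have e: "E' y l'" "E' l y" using E'_iff[of y l'] E'_iff[of l y] assms by simp_all
  have "dist (S \<union> N) E' l l' \<le> dist (S \<union> N) E' l y + dist (S \<union> N) E' y l'"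
    by (rule dist_triangle[OF r1 r2])
  moreover have "dist (S \<union> N) E' y l' = 1" by (rule dist_adj[of E' y l' "S \<union> N", OF e(1) inV(3) inV(2) ny(1)])
  moreover have "dist (S \<union> N) E' l y = 1" by (rule dist_adj[of E' l y "S \<union> N", OF e(2) inV(1) inV(3) ny(2)])
  ultimately have le: "dist (S \<union> N) E' l l' \<le> 2" by simp
  have n0: "dist (S \<union> N) E' l l' \<noteq> 0" using dist_eq_0[OF r3] assms(3) by blast
  have n1: "dist (S \<union> N) E' l l' \<noteq> 1"
  proof
    assume "dist (S \<union> N) E' l l' = 1"
    then have "E' l l'" using dist_eq_1[OF r3] by blast
    moreover have "l \<notin> S" "l \<noteq> y" "l' \<noteq> y" using assms disj yS by blast+
    ultimately show False using E'_iff[of l l'] by simp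
  qed
  show ?thesis using le n0 n1 by simp
qed

lemma sum_dist_new: assumes "finite N" "l \<in> N" shows "(\<Sum>l'\<in>N. real (dist (S \<union> N) E' l l')) = 2 * (real (card N) - 1)"
  using sum_all_but_one[OF assms] dist_refl[of l "S \<union> N" E'] dist_new_new[OF assms(2)] assms(2) by simp

lemma sum_dist:
  assumes "finite S" "finite N"
  shows "(\<Sum>a\<in>S \<union> N. \<Sum>b\<in>S \<union> N. real (dist (S \<union> N) E' a b)) =
    (\<Sum>a\<in>S. \<Sum>b\<in>S. real (dist S E a b))
    + 2 * real (card N) * ((\<Sum>a\<in>S. real (dist S E a y)) + real (card S))
    + 2 * real (card N) * (real (card N) - 1)"
proof -
  let ?d = "\<lambda>a b. real (dist (S \<union> N) E' a b)"
  have "S \<union> N - S = N" using disj by blast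
  then have split: "(\<Sum>a\<in>S \<union> N. \<Sum>b\<in>S \<union> N. ?d a b) = (\<Sum>a\<in>S. \<Sum>b\<in>S. ?d a b)
      + (\<Sum>a\<in>S. \<Sum>b\<in>N. ?d a b) + (\<Sum>a\<in>N. \<Sum>b\<in>S. ?d a b) + (\<Sum>a\<in>N. \<Sum>b\<in>N. ?d a b)"
    using sum_split2[of "S \<union> N" S ?d] assms by simp
  have SS: "(\<Sum>a\<in>S. \<Sum>b\<in>S. ?d a b) = (\<Sum>a\<in>S. \<Sum>b\<in>S. real (dist S E a b))"
    by (intro sum.cong refl) (simp add: dist_old)
  have "(\<Sum>a\<in>S. \<Sum>b\<in>N. ?d a b) = (\<Sum>a\<in>S. \<Sum>b\<in>N. real (dist S E a y) + 1)"
    by (intro sum.cong refl) (simp add: dist_old_new)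
  then have SN: "(\<Sum>a\<in>S. \<Sum>b\<in>N. ?d a b) = real (card N) * ((\<Sum>a\<in>S. real (dist S E a y)) + real (card S))"
    by (simp add: sum.distrib sum_distrib_left algebra_simps)
  have "(\<Sum>a\<in>N. \<Sum>b\<in>S. ?d a b) = (\<Sum>b\<in>S. \<Sum>a\<in>N. ?d b a)"
    using dist_sym[of E', OF E'_sym] by (subst sum.swap) simp
  then have NS: "(\<Sum>a\<in>N. \<Sum>b\<in>S. ?d a b) = (\<Sum>a\<in>S. \<Sum>b\<in>N. ?d a b)" by simp
  have NN: "(\<Sum>a\<in>N. \<Sum>b\<in>N. ?d a b) = real (card N) * (2 * (real (card N) - 1))"
    using sum_dist_new[OF assms(2)] by simp
  show ?thesis using split SS SN NS NN by (simp add: algebra_simps)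
qed

end

section \<open>Two brooms at a special vertex\<close>

locale broom_pair = b1: broom V E x T1 + b2: broom V E x T2
  for V :: "'a set" and E :: "'a \<Rightarrow> 'a \<Rightarrow> bool" and x :: 'a and T1 T2 :: "'a set" +
  assumes components_distinct: "T1 \<noteq> T2"
begin

lemma components_disjoint: "T1 \<inter> T2 = {}"
  using component_disjoint[OF b1.component_axioms b2.component_axioms components_distinct] .

lemma dist_leaves: "l1 \<in> b1.L \<Longrightarrow> l2 \<in> b2.L \<Longrightarrow> dist V E l1 l2 = Suc b1.m + Suc b2.m"
  using b1.dist_out[of l1 l2] b1.L_C b2.L_C b2.C_sub components_disjoint
    b1.L_dist[of l1] b1.d_sym[of l1 x] b2.L_dist[of l2] by auto

lemma third_component:
  assumes "3 \<le> degree V E x"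
  obtains C3 where "component V E x C3" "C3 \<inter> T1 = {}" "C3 \<inter> T2 = {}"
proof -
  have "card {b1.c0, b2.c0} \<le> 2" by (simp add: card_insert_le_m1)
  then have "\<not> {u \<in> V. E x u} \<subseteq> {b1.c0, b2.c0}"
    using card_mono[of "{b1.c0, b2.c0}" "{u \<in> V. E x u}"] assms unfolding degree_def by auto
  then obtain u3 where u3: "u3 \<in> V" "E x u3" "u3 \<noteq> b1.c0" "u3 \<noteq> b2.c0" by blast
  define C3 where "C3 = {v. reachable_in (V - {x}) E u3 v}"
  have "u3 \<noteq> x" using u3(2) b1.irr by blast
  then have C3: "component V E x C3"
    unfolding component_def component_axioms_def component_minus_def C3_def
    using b1.tree_axioms b1.xV u3(1) by blast
  have "u3 \<in> C3" unfolding C3_def using reach_refl[of u3 "V - {x}" E] u3(1) \<open>u3 \<noteq> x\<close> by blast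
  then have "C3 \<noteq> T1" "C3 \<noteq> T2"
    using b1.C_nbr_unique[of u3 b1.c0] b2.C_nbr_unique[of u3 b2.c0] u3 b1.c0 b2.c0 by auto
  then show ?thesis
    using that[OF C3] component_disjoint[OF C3 b1.component_axioms] component_disjoint[OF C3 b2.component_axioms] by blast
qed

lemma small_component:
  assumes "3 \<le> degree V E x"
  obtains C where "component V E x C" "C \<inter> T1 = {}" "2 * card C + card T1 < card V"
proof -
  obtain C3 where C3: "component V E x C3" "C3 \<inter> T1 = {}" "C3 \<inter> T2 = {}"
    using third_component[OF assms] by blast
  have sub: "T1 \<union> T2 \<union> C3 \<union> {x} \<subseteq> V" using b1.C_sub b2.C_sub component.C_sub[OF C3(1)] b1.xV by blast
  then have "finite T1" "finite T2" "finite C3" using b1.fin finite_subset by blast+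
  moreover have "x \<notin> T1 \<union> T2 \<union> C3" using b1.C_sub b2.C_sub component.C_sub[OF C3(1)] by blast
  moreover have "(T1 \<union> T2) \<inter> C3 = {}" using C3(2,3) by blast
  ultimately have "card (T1 \<union> T2 \<union> C3 \<union> {x}) = card T1 + card T2 + card C3 + 1"
    using components_disjoint by (simp add: card_Un_disjoint)
  then have "card T1 + card T2 + card C3 + 1 \<le> card V" using card_mono[OF b1.fin sub] by simp
  then show ?thesis
    using that[OF C3(1,2)] that[OF b2.component_axioms] components_disjoint
    by (cases "card T2 \<le> card C3") (auto simp: Int_commute)
qed

lemma not_shorter:
  assumes max: "max_wiener V E" and deg: "3 \<le> degree V E x"
    and diam: "Suc b1.m + Suc b2.m < diameter V E"
  shows "\<not> b1.m < b2.m"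
proof
  assume shorter: "b1.m < b2.m"
  obtain C where C: "component V E x C" "C \<inter> T1 = {}" "2 * card C + card T1 < card V"
    using small_component[OF deg] by blast
  interpret r: rehang V E x T1 C
    using b1.component_axioms C unfolding rehang_def rehang_axioms_def by blast
  obtain y2 where y2: "y2 \<in> b2.L" using b2.L_ne by blast
  have "dist V E a x + dist V E x b < diameter V E" if a: "a \<in> T1" and b: "b \<in> V" for a b
  proof -
    have "dist V E a x \<le> Suc b1.m" using b1.C_dist_x[OF a] b1.d_sym by simp
    moreover consider "b \<in> T1" | "b \<in> T2" | "b \<notin> T1" "b \<notin> T2" by blast
    then have "dist V E x b < Suc b2.m + (diameter V E - Suc b1.m - Suc b2.m)"
    proof cases
      case 1 then show ?thesis using b1.C_dist_x[of b] shorter diam by fastforce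
    next
      case 2 then show ?thesis using b2.C_dist_x[of b] shorter diam by fastforce
    next
      case 3
      have "dist V E y2 b = dist V E y2 x + dist V E x b"
        using b2.dist_out[OF b2.L_C[THEN subsetD, OF y2] b 3(2)] .
      moreover have "dist V E y2 b \<le> diameter V E" using diam_ge[OF b1.fin] y2 b2.L_leaf(4) b by blast
      ultimately show ?thesis using b2.L_dist[OF y2] b1.d_sym[of y2 x] shorter diam by simp
    qed
    ultimately show ?thesis using diam by linarith
  qed
  then have "diameter V r.F = diameter V E" by (rule r.diameter_unchanged)
  then have "wiener V r.F \<le> wiener V E" using max r.F_tree unfolding max_wiener_def by blast
  then show False using r.wiener_increases[OF C(3)] by simp
qed

lemma spine_lengths_eq:
  assumes "max_wiener V E" "3 \<le> degree V E x" "Suc b1.m + Suc b2.m < diameter V E"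
  shows "b1.m = b2.m"
proof -
  interpret swapped: broom_pair V E x T2 T1
    using b1.broom_axioms b2.broom_axioms components_distinct
    unfolding broom_pair_def broom_pair_axioms_def by blast
  show ?thesis using not_shorter[OF assms] swapped.not_shorter[OF assms(1,2)] assms(3) by simp
qed

lemma sum_shift_to_bv_outside:
  "(\<Sum>a\<in>V - T2. real (dist V E a b1.bv) - real (dist V E a x))
     = real b1.m * real (card (V - (T1 \<union> {x} \<union> T2))) - real b1.m * real (card b1.L)"
proof -
  let ?f = "\<lambda>a. real (dist V E a b1.bv) - real (dist V E a x)"
  define B where "B = V - (T1 \<union> {x} \<union> T2)"
  have T1: "T1 \<subseteq> V - T2" using b1.C_sub components_disjoint by blast
  have rest: "V - T2 - T1 = insert x B" unfolding B_def using b1.xV b1.C_sub b2.C_sub by blast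
  have "?f a = real b1.m" if "a \<in> insert x B" for a
  proof -
    have a: "a \<in> V" "a \<notin> T1" using that b1.xV b1.C_sub unfolding B_def by auto
    have "dist V E b1.bv a = dist V E b1.bv x + dist V E x a" using b1.dist_out[OF b1.bv(1) a] .
    then show ?thesis using b1.d_sym[of a b1.bv] b1.d_sym[of a x] b1.d_sym[of b1.bv x]
      unfolding b1.m_def by simp
  qed
  then have "(\<Sum>a\<in>insert x B. ?f a) = real b1.m * (real (card B) + 1)"
    using b1.fin unfolding B_def by simp
  moreover have "(\<Sum>a\<in>V - T2. ?f a) = (\<Sum>a\<in>T1. ?f a) + (\<Sum>a\<in>V - T2 - T1. ?f a)"
    using sum.subset_diff[OF T1] b1.fin by (simp add: add.commute)
  ultimately show ?thesis using b1.sum_shift_to_bv rest unfolding B_def by (simp add: algebra_simps)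
qed

text \<open>Both Wiener indices split along V - T2, whose internal distances are the same in T and T';
  what differs is T2 hanging from x versus the new leaves hanging from bv.\<close>

lemma wiener_relocate_sums:
  assumes "relocate V E T2 b1.bv V' E'"
  shows "wiener V' E' - wiener V E =
      real (card T2) * (\<Sum>a\<in>V - T2. real (dist V E a b1.bv) - real (dist V E a x))
      + real (card T2) * real (card (V - T2)) + real (card T2) * (real (card T2) - 1)
      - real (card (V - T2)) * (\<Sum>w\<in>T2. real (dist V E x w))
      - (\<Sum>a\<in>T2. \<Sum>b\<in>T2. real (dist V E a b)) / 2"
proof -
  obtain N where N: "finite N" "N \<inter> V = {}" "card N = card T2" "V' = (V - T2) \<union> N"
    and E': "\<And>u v. E' u v \<longleftrightarrow> (E u v \<and> u \<in> V - T2 \<and> v \<in> V - T2)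
                                 \<or> (u = b1.bv \<and> v \<in> N) \<or> (v = b1.bv \<and> u \<in> N)"
    using assms unfolding relocate_def by blast
  define S where "S = V - T2"
  have bvS: "b1.bv \<in> S" unfolding S_def using b1.bv(1) b1.C_sub components_disjoint by blast
  interpret new: leaf_attachment S N E E' b1.bv
    using b1.sym b2.VC_conn bvS N(2) E' unfolding leaf_attachment_def S_def by blast
  define SS where "SS = (\<Sum>a\<in>S. \<Sum>b\<in>S. real (dist S E a b))"
  define Y where "Y = (\<Sum>a\<in>S. real (dist V E a b1.bv))"
  define X where "X = (\<Sum>a\<in>S. real (dist V E a x))"
  have "finite S" unfolding S_def using b1.fin by simp
  moreover have "(\<Sum>a\<in>S. real (dist S E a b1.bv)) = Y"
    unfolding Y_def S_def using bvS b2.dist_VC unfolding S_def by (intro sum.cong refl) simp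
  ultimately have "wiener V' E' = (SS + 2 * real (card T2) * (Y + real (card S))
                          + 2 * real (card T2) * (real (card T2) - 1)) / 2"
    using new.sum_dist[OF _ N(1)] N(3,4) unfolding wiener_def SS_def S_def by simp
  moreover have "wiener V E = (SS + 2 * (real (card T2) * X
      + real (card S) * (\<Sum>w\<in>T2. real (dist V E x w))) + (\<Sum>a\<in>T2. \<Sum>b\<in>T2. real (dist V E a b))) / 2"
    using b2.sum_dist_across unfolding wiener_def SS_def X_def S_def by simp
  moreover have "Y - X = (\<Sum>a\<in>S. real (dist V E a b1.bv) - real (dist V E a x))"
    unfolding X_def Y_def by (simp add: sum_subtractf)
  ultimately show ?thesis unfolding S_def by (simp add: field_simps)
qed

lemma wiener_relocate:
  assumes lengths: "b1.m = b2.m" and rel: "relocate V E T2 b1.bv V' E'"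
  shows "let p = real (Suc b1.m); t1 = real (card b1.L); t2 = real (card b2.L);
             A = T1 \<union> {x}; B = V - (A \<union> T2)
         in wiener V' E' - wiener V E =
              (p + t2 - 1) * (p + t2 - 2) - p * (p - 1) / 6 * (3 * t2 + p - 2) - t2 * (t2 - 1)
              + real (card (A \<union> B)) * (p + t2 - 1 - p / 2 * (p - 1 + 2 * t2))
              + (p + t2 - 1) * (p - 1) * (real (card B) - t1)"
proof -
  define B where "B = V - (T1 \<union> {x} \<union> T2)"
  have "T1 \<union> {x} \<union> B = V - T2" unfolding B_def using b1.xV b1.C_sub b2.C_sub components_disjoint by blast
  then have AB: "card (T1 \<union> {x} \<union> B) = card (V - T2)" by simp
  have T2: "real (card T2) = real b1.m + real (card b2.L)" using b2.card_C lengths by simp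
  show ?thesis
    using wiener_relocate_sums[OF rel] sum_shift_to_bv_outside b2.sum_dist_x_C b2.sum_dist_C lengths
    unfolding Let_def B_def[symmetric] AB T2 by (simp add: field_simps)
qed

end

theorem mainTheorem4:
  fixes V :: "'a set" and E :: "'a \<Rightarrow> 'a \<Rightarrow> bool"
    and x y1 y2 y1' :: 'a and T1 T2 :: "'a set"
    and V' :: "'a set" and E' :: "'a \<Rightarrow> 'a \<Rightarrow> bool"
  assumes "max_wiener V E"
    and "special V E x"
    and "special_pair V E x T1 T2"
    and "y1 \<in> T1" and "leaf V E y1"
    and "y2 \<in> T2" and "leaf V E y2"
    and "E y1 y1'"
    and "relocate V E T2 y1' V' E'"
  shows "let p = real (dist V E x y1);
             t1 = real (card {v \<in> T1. leaf V E v});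
             t2 = real (card {v \<in> T2. leaf V E v});
             A = T1 \<union> {x};
             B = V - (A \<union> T2)
         in wiener V' E' - wiener V E =
              (p + t2 - 1) * (p + t2 - 2) - p * (p - 1) / 6 * (3 * t2 + p - 2) - t2 * (t2 - 1)
              + real (card (A \<union> B)) * (p + t2 - 1 - p / 2 * (p - 1 + 2 * t2))
              + (p + t2 - 1) * (p - 1) * (real (card B) - t1)"
proof -
  have tree: "is_tree V E" using assms(1) unfolding max_wiener_def by blast
  have x: "x \<in> V" "3 \<le> degree V E x" using assms(2) unfolding special_def by auto
  then have "\<not> leaf V E x" unfolding leaf_def by simp
  then interpret broom_pair V E x T1 T2
    using assms(3) tree x(1) unfolding special_pair_def broom_pair_def broom_pair_axioms_def
      broom_def broom_axioms_def component_def component_axioms_def tree_def by blast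
  have y1: "y1 \<in> b1.L" and y2: "y2 \<in> b2.L" using b1.C_leaf_in_L b2.C_leaf_in_L assms(4-7) by blast+
  have "dist V E y1 y2 < diameter V E" using assms(3-7) unfolding special_pair_def by blast
  then have lengths: "b1.m = b2.m" using spine_lengths_eq[OF assms(1) x(2)] dist_leaves[OF y1 y2] by simp
  have "y1' = b1.bv" using b1.L_nbr[OF y1 assms(8)] .
  moreover have "dist V E x y1 = Suc b1.m" using b1.L_dist[OF y1] .
  moreover have "{v \<in> T1. leaf V E v} = b1.L" "{v \<in> T2. leaf V E v} = b2.L" using b1.leaves_C b2.leaves_C .
  ultimately show ?thesis using wiener_relocate[OF lengths] assms(9) by simp
qed

end
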